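(* Let $M$ be a finitely generated $\mathbb{Z}$-module and let $z:M\to M$ be an automorphism. Suppose that there is a sequence of integers $r_i\to\infty$ and automorphisms $w_i:M\to M$ satisfying $w_i^{r_i}=z$. Then $z$ has finite order in $\operatorname{Aut} M$. *)

theory Defs
  imports "HOL-Algebra.Algebra"
begin

text \<open>A finitely generated abelian group (= finitely generated Z-module).\<close>
definition fin_gen_comm_group :: "('a, 'b) monoid_scheme \<Rightarrow> bool" where
  "fin_gen_comm_group M \<longleftrightarrow> comm_group M \<and>
     (\<exists>S. finite S \<and> S \<subseteq> carrier M \<and> generate M S = carrier M)"

end

theory Submission
  imports Defs Jordan_Normal_Form.Spectral_Radius Jordan_Normal_Form.Jordan_Normal_Form_Uniqueness
begin

text \<open>
  Pick a maximal \<int>-independent list bs among the generators of M. For some D > 0 every D-th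
  power lies in the free subgroup spanned by bs, and dividing the coordinates of f(b)^D (b in bs)
  by D turns each automorphism f into a complex matrix whose denominators divide D, compatibly
  with composition. An automorphism with identity matrix moves every element only by torsion;
  the torsion subgroup being finite, such an automorphism has finite order.

  It remains to show that the matrix Z of z has finite order. Let W_i be the matrix of w_i. Every
  eigenvalue \<mu> of W_i satisfies 1/R \<le> |\<mu>|^(r_i) \<le> R, where R bounds the spectra of Z and Z^(-1).
  Matrices with bounded denominators and bounded spectrum have only finitely many eigenvalues
  (roots of integer polynomials with bounded coefficients), so for large i the spectrum of W_i
  lies on the unit circle and, by Kronecker's argument, consists of roots of unity of a common
  order N. Then U = W_i^N is unipotent with U^(r_i) = Z^N. Writing U = 1 + X with X^j \<noteq> 0 = X^(j+1)
  gives (Z^N - 1)^j = r_i^j X^j, whose nonzero entries have modulus at least (r_i/D)^j; for large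
  r_i this contradicts the fixed size of Z^N - 1 unless X = 0. Hence Z^N = 1.
\<close>

section \<open>Periodicity forced by finiteness\<close>

lemma finite_range_imp_repeat:
  fixes f :: "nat \<Rightarrow> 'a"
  assumes "finite (range f)"
  obtains a b where "a < b" and "f a = f b"
proof -
  have "\<not> inj f"
    using assms finite_imageD infinite_UNIV_nat by blast
  then obtain a b where "a \<noteq> b" and "f a = f b"
    unfolding inj_def by blast
  then show ?thesis
    using that by (cases a b rule: linorder_cases) auto
qed

lemma finite_inj_on_funpow_id:
  assumes T: "finite T" and inj: "inj_on f T" and into: "f ` T \<subseteq> T"
  obtains a where "a > 0" and "\<And>t. t \<in> T \<Longrightarrow> (f ^^ a) t = t"
proof -
  have into_pow: "(f ^^ m) ` T \<subseteq> T" for m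
    by (induct m) (use into in auto)
  have inj_pow: "inj_on (f ^^ m) T" for m
  proof (induct m)
    case (Suc m)
    then show ?case
      using comp_inj_on[OF Suc inj_on_subset[OF inj into_pow]] by (simp add: comp_def)
  qed simp
  have "range (\<lambda>m. restrict (f ^^ m) T) \<subseteq> T \<rightarrow>\<^sub>E T"
    using into_pow by fastforce
  then have "finite (range (\<lambda>m. restrict (f ^^ m) T))"
    using finite_PiE[OF T, of "\<lambda>_. T"] T finite_subset by blast
  then obtain m1 m2 where "m1 < m2" and eq: "restrict (f ^^ m1) T = restrict (f ^^ m2) T"
    by (rule finite_range_imp_repeat)
  have "(f ^^ (m2 - m1)) t = t" if t: "t \<in> T" for t
  proof -
    have "(f ^^ m1) ((f ^^ (m2 - m1)) t) = (f ^^ m2) t"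
      using \<open>m1 < m2\<close> funpow_add[of m1 "m2 - m1" f] by simp
    also have "\<dots> = (f ^^ m1) t"
      using fun_cong[OF eq, of t] t by simp
    finally show ?thesis
      using inj_pow[of m1] t into_pow[of "m2 - m1"] unfolding inj_on_def by blast
  qed
  with \<open>m1 < m2\<close> show ?thesis
    using that[of "m2 - m1"] by simp
qed

lemma finite_roots_of_unity_common_exponent:
  fixes S :: "'a::monoid_mult set"
  assumes "finite S" and "\<And>x. x \<in> S \<Longrightarrow> \<exists>t>0. x ^ t = 1"
  obtains N where "N > 0" and "\<And>x. x \<in> S \<Longrightarrow> x ^ N = 1"
proof -
  obtain t where t: "\<And>x. x \<in> S \<Longrightarrow> t x > 0 \<and> x ^ t x = 1"
    using assms(2) by metis
  show ?thesis
  proof (rule that[of "\<Prod>x\<in>S. t x"])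
    show "(\<Prod>x\<in>S. t x) > 0"
      using t by (intro prod_pos) auto
    fix x assume "x \<in> S"
    then obtain q where "(\<Prod>x\<in>S. t x) = t x * q"
      using dvd_prodI[OF assms(1)] by (metis dvdE)
    then show "x ^ (\<Prod>x\<in>S. t x) = 1"
      using t[OF \<open>x \<in> S\<close>] by (simp add: power_mult)
  qed
qed

section \<open>Powers, triangularization and eigenvalues of matrices\<close>

lemma pow_mat_add:
  fixes A :: "'a::semiring_1 mat"
  assumes A: "A \<in> carrier_mat n n"
  shows "A ^\<^sub>m (a + b) = A ^\<^sub>m a * A ^\<^sub>m b"
proof -
  interpret R: semiring "ring_mat TYPE('a) n ()" by (rule semiring_mat)
  show ?thesis
    using R.nat_pow_mult[of A a b] A
    by (simp add: pow_mat_ring_pow[OF A, where b = "()"] ring_mat_simps)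
qed

lemma pow_mat_mult:
  fixes A :: "'a::semiring_1 mat"
  assumes A: "A \<in> carrier_mat n n"
  shows "A ^\<^sub>m (a * b) = (A ^\<^sub>m a) ^\<^sub>m b"
proof (induct b)
  case (Suc b)
  have "A ^\<^sub>m (a * Suc b) = A ^\<^sub>m (a * b) * A ^\<^sub>m a"
    using pow_mat_add[OF A, of "a * b" a] by (simp add: add.commute)
  with Suc show ?case by simp
qed (use A in simp)

lemma mult_pow_mat_commute:
  fixes A B :: "'a::semiring_1 mat"
  assumes A: "A \<in> carrier_mat n n" and B: "B \<in> carrier_mat n n" and AB: "A * B = B * A"
  shows "(A * B) ^\<^sub>m m = A ^\<^sub>m m * B ^\<^sub>m m"
proof -
  interpret R: semiring "ring_mat TYPE('a) n ()" by (rule semiring_mat)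
  have "A \<otimes>\<^bsub>ring_mat TYPE('a) n ()\<^esub> B = B \<otimes>\<^bsub>ring_mat TYPE('a) n ()\<^esub> A"
    using AB by (simp add: ring_mat_simps)
  from R.pow_mult_distrib[OF this] A B show ?thesis
    by (simp add: pow_mat_ring_pow[OF A, where b = "()"] pow_mat_ring_pow[OF B, where b = "()"]
        pow_mat_ring_pow[OF mult_carrier_mat[OF A B], where b = "()"] ring_mat_simps)
qed

lemma one_pow_mat [simp]: "(1\<^sub>m n :: 'a::semiring_1 mat) ^\<^sub>m m = 1\<^sub>m n"
  by (induct m) auto

definition upper_band :: "nat \<Rightarrow> 'a::zero mat \<Rightarrow> bool" where
  "upper_band k A \<longleftrightarrow>
     (\<forall>i j. i < dim_row A \<longrightarrow> j < dim_col A \<longrightarrow> j < i + k \<longrightarrow> A $$ (i, j) = 0)"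

lemma upper_band_0_iff_upper_triangular:
  "A \<in> carrier_mat n n \<Longrightarrow> upper_band 0 A \<longleftrightarrow> upper_triangular A"
  unfolding upper_band_def upper_triangular_def by auto

lemma upper_band_mult:
  fixes A B :: "'a::semiring_0 mat"
  assumes A: "A \<in> carrier_mat n n" and B: "B \<in> carrier_mat n n"
    and "upper_band a A" and "upper_band b B"
  shows "upper_band (a + b) (A * B)"
  unfolding upper_band_def
proof (intro allI impI)
  fix i j assume i: "i < dim_row (A * B)" and j: "j < dim_col (A * B)" and ij: "j < i + (a + b)"
  have "A $$ (i, l) * B $$ (l, j) = 0" if "l < n" for l
  proof (cases "l < i + a")
    case True
    then show ?thesis using \<open>upper_band a A\<close> that i A B unfolding upper_band_def by auto
  next
    case False
    then show ?thesis using \<open>upper_band b B\<close> that ij j A B unfolding upper_band_def by auto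
  qed
  then show "(A * B) $$ (i, j) = 0"
    using i j A B by (auto simp: scalar_prod_def intro: sum.neutral)
qed

lemma upper_band_pow:
  fixes A :: "'a::semiring_1 mat"
  assumes A: "A \<in> carrier_mat n n" and "upper_band k A"
  shows "upper_band (m * k) (A ^\<^sub>m m)"
proof (induct m)
  case 0
  then show ?case by (simp add: upper_band_def)
next
  case (Suc m)
  then have "upper_band (m * k + k) (A ^\<^sub>m m * A)"
    using A \<open>upper_band k A\<close> by (intro upper_band_mult[of _ n]) auto
  then show ?case by (simp add: add.commute)
qed

lemma upper_band_dim_eq_zero:
  assumes "A \<in> carrier_mat n n" and "upper_band n A"
  shows "A = 0\<^sub>m n n"
  using assms by (intro eq_matI) (auto simp: upper_band_def)

lemma upper_triangular_mult_diag:
  fixes A B :: "'a::semiring_0 mat"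
  assumes A: "A \<in> carrier_mat n n" and B: "B \<in> carrier_mat n n"
    and "upper_triangular A" and "upper_triangular B" and i: "i < n"
  shows "(A * B) $$ (i, i) = A $$ (i, i) * B $$ (i, i)"
proof -
  have "(A * B) $$ (i, i) = (\<Sum>l = 0..<n. A $$ (i, l) * B $$ (l, i))"
    using A B i by (auto simp: scalar_prod_def)
  also have "\<dots> = (\<Sum>l = 0..<n. if l = i then A $$ (i, i) * B $$ (i, i) else 0)"
    using assms by (intro sum.cong) (auto simp: upper_triangularD elim: linorder_neqE_nat)
  also have "\<dots> = A $$ (i, i) * B $$ (i, i)"
    using i by simp
  finally show ?thesis .
qed

lemma upper_triangular_pow:
  fixes B :: "'a::semiring_1 mat"
  assumes B: "B \<in> carrier_mat n n" and "upper_triangular B"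
  shows "upper_triangular (B ^\<^sub>m m)"
proof -
  have "upper_band (m * 0) (B ^\<^sub>m m)"
    using assms by (intro upper_band_pow[of _ n]) (auto simp: upper_band_0_iff_upper_triangular)
  then show ?thesis
    using B by (auto simp: upper_band_0_iff_upper_triangular[of _ n])
qed

lemma upper_triangular_pow_diag:
  fixes B :: "'a::comm_semiring_1 mat"
  assumes B: "B \<in> carrier_mat n n" and ut: "upper_triangular B" and i: "i < n"
  shows "(B ^\<^sub>m m) $$ (i, i) = B $$ (i, i) ^ m"
proof (induct m)
  case (Suc m)
  have "(B ^\<^sub>m m * B) $$ (i, i) = (B ^\<^sub>m m) $$ (i, i) * B $$ (i, i)"
    using B ut i upper_triangular_pow[OF B ut] by (intro upper_triangular_mult_diag[of _ n]) auto
  with Suc show ?case by (simp add: mult.commute)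
qed (use B i in simp)

lemma eigenvalue_upper_triangular_iff:
  fixes B :: "'a::field mat"
  assumes B: "B \<in> carrier_mat n n" and "upper_triangular B"
  shows "eigenvalue B e \<longleftrightarrow> (\<exists>i<n. e = B $$ (i, i))"
proof -
  have "char_poly B = (\<Prod>a\<leftarrow>diag_mat B. [:- a, 1:])"
    using assms by (intro char_poly_upper_triangular) auto
  then have "eigenvalue B e \<longleftrightarrow> e \<in> set (diag_mat B)"
    by (simp add: eigenvalue_root_char_poly[OF B] poly_prod_list_zero_iff)
  also have "set (diag_mat B) = {B $$ (i, i) | i. i < n}"
    using B by (auto simp: diag_mat_def)
  finally show ?thesis by blast
qed

lemma eigenvalue_similar_iff:
  fixes A B :: "'a::field mat"
  assumes "similar_mat A B"
  shows "eigenvalue A e \<longleftrightarrow> eigenvalue B e"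
proof -
  obtain n where "A \<in> carrier_mat n n" "B \<in> carrier_mat n n"
    using similar_matD[OF assms] by blast
  then show ?thesis
    using char_poly_similar[OF assms] by (simp add: eigenvalue_root_char_poly)
qed

lemma complex_triangularization:
  fixes A :: "complex mat"
  assumes A: "A \<in> carrier_mat n n"
  obtains B P Q where "similar_mat_wit A B P Q" and "upper_triangular B" and "B \<in> carrier_mat n n"
proof -
  obtain es where "char_poly A = (\<Prod>a\<leftarrow>es. [:- a, 1:])"
    using char_poly_factorized[OF A] by blast
  moreover obtain B P Q where "schur_decomposition A es = (B, P, Q)"
    by (cases "schur_decomposition A es") auto
  ultimately have "similar_mat_wit A B P Q" and "upper_triangular B"
    using schur_decomposition[OF A] by blast+
  moreover from similar_mat_witD2[OF A this(1)] have "B \<in> carrier_mat n n" by auto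
  ultimately show ?thesis by (rule that)
qed

lemma eigenvalue_pow_mat:
  fixes A :: "'a::comm_ring_1 mat"
  assumes A: "A \<in> carrier_mat n n" and "eigenvalue A e"
  shows "eigenvalue (A ^\<^sub>m m) (e ^ m)"
proof -
  obtain v where v: "eigenvector A v e"
    using assms(2) unfolding eigenvalue_def by blast
  then have "eigenvector (A ^\<^sub>m m) v (e ^ m)"
    using eigenvector_pow[OF A v, of m] A unfolding eigenvector_def by auto
  then show ?thesis
    unfolding eigenvalue_def by blast
qed

lemma eigenvalue_pow_mat_iff:
  fixes A :: "complex mat"
  assumes A: "A \<in> carrier_mat n n"
  shows "eigenvalue (A ^\<^sub>m m) \<nu> \<longleftrightarrow> (\<exists>e. eigenvalue A e \<and> \<nu> = e ^ m)"
proof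
  assume "eigenvalue (A ^\<^sub>m m) \<nu>"
  obtain B P Q where wit: "similar_mat_wit A B P Q" and ut: "upper_triangular B"
    and B: "B \<in> carrier_mat n n"
    using complex_triangularization[OF A] .
  have sim: "similar_mat A B" and sim_pow: "similar_mat (A ^\<^sub>m m) (B ^\<^sub>m m)"
    using wit similar_mat_wit_pow[OF wit] unfolding similar_mat_def by blast+
  obtain i where i: "i < n" and "\<nu> = (B ^\<^sub>m m) $$ (i, i)"
    using \<open>eigenvalue (A ^\<^sub>m m) \<nu>\<close> eigenvalue_similar_iff[OF sim_pow]
      eigenvalue_upper_triangular_iff[OF pow_carrier_mat[OF B] upper_triangular_pow[OF B ut]]
    by blast
  then have "\<nu> = B $$ (i, i) ^ m"
    using upper_triangular_pow_diag[OF B ut i] by simp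
  moreover have "eigenvalue A (B $$ (i, i))"
    using eigenvalue_similar_iff[OF sim] eigenvalue_upper_triangular_iff[OF B ut] i by blast
  ultimately show "\<exists>e. eigenvalue A e \<and> \<nu> = e ^ m" by blast
qed (use eigenvalue_pow_mat[OF A] in blast)

lemma unitriangular_minus_one_nilpotent:
  fixes B :: "'a::comm_ring_1 mat"
  assumes B: "B \<in> carrier_mat n n" and "upper_triangular B" and diag: "\<And>i. i < n \<Longrightarrow> B $$ (i, i) = 1"
  shows "(B - 1\<^sub>m n) ^\<^sub>m n = 0\<^sub>m n n"
proof -
  have B1: "B - 1\<^sub>m n \<in> carrier_mat n n"
    by (rule minus_carrier_mat[OF one_carrier_mat])
  have "upper_band 1 (B - 1\<^sub>m n)"
    unfolding upper_band_def
  proof (intro allI impI)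
    fix i j assume "i < dim_row (B - 1\<^sub>m n)" and "j < dim_col (B - 1\<^sub>m n)" and "j < i + 1"
    then have "i < n" and "j < n" and "j < i \<or> j = i"
      by auto
    then show "(B - 1\<^sub>m n) $$ (i, j) = 0"
      using B diag upper_triangularD[OF \<open>upper_triangular B\<close>] by auto
  qed
  then have "upper_band n ((B - 1\<^sub>m n) ^\<^sub>m n)"
    using upper_band_pow[OF B1, of 1 n] by simp
  then show ?thesis
    using B1 by (intro upper_band_dim_eq_zero) auto
qed

lemma pow_mat_minus_one_nilpotent:
  fixes A :: "complex mat"
  assumes A: "A \<in> carrier_mat n n" and roots: "\<And>e. eigenvalue A e \<Longrightarrow> e ^ m = 1"
  shows "(A ^\<^sub>m m - 1\<^sub>m n) ^\<^sub>m n = 0\<^sub>m n n"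
proof -
  obtain B P Q where wit: "similar_mat_wit A B P Q" and ut: "upper_triangular B"
    and B: "B \<in> carrier_mat n n"
    using complex_triangularization[OF A] .
  have char: "char_matrix C 1 = C - 1\<^sub>m n" if "C \<in> carrier_mat n n" for C :: "complex mat"
    using that by (intro eq_matI) (auto simp: char_matrix_def)
  have "similar_mat_wit (A ^\<^sub>m m - 1\<^sub>m n) (B ^\<^sub>m m - 1\<^sub>m n) P Q"
    using similar_mat_wit_char_matrix[OF similar_mat_wit_pow[OF wit, of m], of 1] A B by (simp add: char)
  then have "(A ^\<^sub>m m - 1\<^sub>m n) ^\<^sub>m n = P * (B ^\<^sub>m m - 1\<^sub>m n) ^\<^sub>m n * Q"
    by (rule similar_mat_wit_pow_id)
  moreover have "(B ^\<^sub>m m) $$ (i, i) = 1" if i: "i < n" for i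
  proof -
    have "eigenvalue A (B $$ (i, i))"
      using wit eigenvalue_similar_iff eigenvalue_upper_triangular_iff[OF B ut] i
      unfolding similar_mat_def by blast
    then show ?thesis
      using roots upper_triangular_pow_diag[OF B ut i] by simp
  qed
  then have "(B ^\<^sub>m m - 1\<^sub>m n) ^\<^sub>m n = 0\<^sub>m n n"
    using B ut by (intro unitriangular_minus_one_nilpotent upper_triangular_pow) auto
  ultimately show ?thesis
    using similar_mat_witD2[OF A wit] by simp
qed

lemma eigenvalue_smult_mat:
  fixes A :: "'a::field mat"
  assumes A: "A \<in> carrier_mat n n" and "eigenvalue A \<mu>"
  shows "eigenvalue (c \<cdot>\<^sub>m A) (c * \<mu>)"
proof -
  obtain v where "eigenvector A v \<mu>"
    using assms(2) unfolding eigenvalue_def by blast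
  then have v: "v \<in> carrier_vec n" "v \<noteq> 0\<^sub>v n" and Av: "A *\<^sub>v v = \<mu> \<cdot>\<^sub>v v"
    using A unfolding eigenvector_def by auto
  have "(c \<cdot>\<^sub>m A) *\<^sub>v v = (c * \<mu>) \<cdot>\<^sub>v v"
  proof (rule eq_vecI)
    fix i assume "i < dim_vec ((c * \<mu>) \<cdot>\<^sub>v v)"
    then have i: "i < n" using v by auto
    have "((c \<cdot>\<^sub>m A) *\<^sub>v v) $ i = c * (A *\<^sub>v v) $ i"
      using i A v by (auto simp: scalar_prod_def sum_distrib_left mult.assoc)
    then show "((c \<cdot>\<^sub>m A) *\<^sub>v v) $ i = ((c * \<mu>) \<cdot>\<^sub>v v) $ i"
      using Av i v by simp
  qed (use A v in auto)
  with A v show ?thesis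
    unfolding eigenvalue_def eigenvector_def by auto
qed

lemma eigenvalue_smult_mat_iff:
  fixes A :: "'a::field mat"
  assumes A: "A \<in> carrier_mat n n" and c: "c \<noteq> 0"
  shows "eigenvalue (c \<cdot>\<^sub>m A) e \<longleftrightarrow> eigenvalue A (e / c)"
proof
  assume "eigenvalue (c \<cdot>\<^sub>m A) e"
  from eigenvalue_smult_mat[OF _ this, of n "1 / c"] A c
  have "eigenvalue ((1 / c) \<cdot>\<^sub>m (c \<cdot>\<^sub>m A)) (e / c)" by simp
  moreover have "(1 / c) \<cdot>\<^sub>m (c \<cdot>\<^sub>m A) = A"
    using A c by (intro eq_matI) auto
  ultimately show "eigenvalue A (e / c)" by simp
qed (use eigenvalue_smult_mat[OF A, of "e / c" c] c in simp)

lemma eigenvalue_left_inverse_mat: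
  fixes Z :: "'a::field mat"
  assumes Z: "Z \<in> carrier_mat n n" and Zi: "Zi \<in> carrier_mat n n" and inv: "Zi * Z = 1\<^sub>m n"
    and "eigenvalue Z c"
  shows "c \<noteq> 0" and "eigenvalue Zi (1 / c)"
proof -
  obtain v where v: "v \<in> carrier_vec n" "v \<noteq> 0\<^sub>v n" and Zv: "Z *\<^sub>v v = c \<cdot>\<^sub>v v"
    using assms(4) Z unfolding eigenvalue_def eigenvector_def by auto
  have vv: "v = c \<cdot>\<^sub>v (Zi *\<^sub>v v)"
  proof -
    have "v = Zi *\<^sub>v (Z *\<^sub>v v)"
      using inv Zi Z v by (simp add: assoc_mult_mat_vec[symmetric])
    also have "\<dots> = c \<cdot>\<^sub>v (Zi *\<^sub>v v)"
      unfolding Zv by (rule mult_mat_vec[OF Zi v(1)])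
    finally show ?thesis .
  qed
  show nz: "c \<noteq> 0"
  proof
    assume "c = 0"
    then have v0: "v = 0 \<cdot>\<^sub>v (Zi *\<^sub>v v)"
      using vv by simp
    have "v = 0\<^sub>v n"
    proof (rule eq_vecI)
      fix i assume "i < dim_vec (0\<^sub>v n :: 'a vec)"
      then show "v $ i = 0\<^sub>v n $ i"
        by (subst v0) (use Zi in auto)
    qed (use v in auto)
    with v show False by simp
  qed
  have "Zi *\<^sub>v v = (1 / c) \<cdot>\<^sub>v v"
    using arg_cong[OF vv, of "\<lambda>w. (1 / c) \<cdot>\<^sub>v w"] nz by (simp add: smult_smult_assoc)
  with v Zi show "eigenvalue Zi (1 / c)"
    unfolding eigenvalue_def eigenvector_def by auto
qed

lemma eigenvalues_norm_bounded:
  fixes A :: "complex mat"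
  assumes "A \<in> carrier_mat n n"
  obtains R where "R \<ge> 1" and "\<And>x. eigenvalue A x \<Longrightarrow> norm x \<le> R"
proof -
  have "finite (insert 1 (norm ` spectrum A))"
    using card_finite_spectrum(1)[OF assms] by simp
  then show ?thesis
    by (intro that[of "Max (insert 1 (norm ` spectrum A))"] Max_ge) (auto simp: spectrum_def)
qed

section \<open>Matrices with bounded denominators\<close>

definition denom_dvd_mat :: "nat \<Rightarrow> nat \<Rightarrow> complex mat \<Rightarrow> bool" where
  "denom_dvd_mat n D A \<longleftrightarrow> A \<in> carrier_mat n n \<and> (\<forall>i<n. \<forall>j<n. of_nat D * A $$ (i, j) \<in> \<int>)"

lemma denom_dvd_matE:
  assumes "denom_dvd_mat n D A"
  obtains M :: "int mat" where "M \<in> carrier_mat n n" and "of_nat D \<cdot>\<^sub>m A = map_mat of_int M"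
proof -
  define M where "M = mat n n (\<lambda>ij. SOME m::int. of_nat D * A $$ ij = of_int m)"
  have "of_nat D \<cdot>\<^sub>m A = map_mat of_int M"
  proof (rule eq_matI)
    fix i j assume "i < dim_row (map_mat of_int M :: complex mat)" "j < dim_col (map_mat of_int M :: complex mat)"
    then have ij: "i < n" "j < n" by (auto simp: M_def)
    then have "of_nat D * A $$ (i, j) \<in> \<int>"
      using assms unfolding denom_dvd_mat_def by blast
    then have "\<exists>m::int. of_nat D * A $$ (i, j) = of_int m"
      by (elim Ints_cases) blast
    from someI_ex[OF this] show "(of_nat D \<cdot>\<^sub>m A) $$ (i, j) = map_mat of_int M $$ (i, j)"
      using ij assms unfolding M_def denom_dvd_mat_def by auto
  qed (use assms in \<open>auto simp: M_def denom_dvd_mat_def\<close>)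
  then show ?thesis using that[of M] by (auto simp: M_def)
qed

lemma denom_dvd_mat_mult:
  assumes "denom_dvd_mat n D A" and "denom_dvd_mat n E B"
  shows "denom_dvd_mat n (D * E) (A * B)"
proof -
  have A: "A \<in> carrier_mat n n" and B: "B \<in> carrier_mat n n"
    using assms unfolding denom_dvd_mat_def by auto
  have "of_nat (D * E) * (A * B) $$ (i, j) \<in> \<int>" if "i < n" "j < n" for i j
  proof -
    have "of_nat (D * E) * (A * B) $$ (i, j)
        = (\<Sum>l = 0..<n. (of_nat D * A $$ (i, l)) * (of_nat E * B $$ (l, j)))"
      using that A B by (simp add: scalar_prod_def sum_distrib_left ac_simps)
    also have "\<dots> \<in> \<int>"
    proof (rule Ints_sum)
      fix l assume "l \<in> {0..<n}"
      then show "(of_nat D * A $$ (i, l)) * (of_nat E * B $$ (l, j)) \<in> \<int>"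
        using assms that unfolding denom_dvd_mat_def by (intro Ints_mult[of "_ * _"]) auto
    qed
    finally show ?thesis .
  qed
  then show ?thesis
    using A B unfolding denom_dvd_mat_def by auto
qed

lemma denom_dvd_mat_pow:
  assumes "denom_dvd_mat n D A"
  shows "denom_dvd_mat n (D ^ m) (A ^\<^sub>m m)"
proof (induct m)
  case 0
  have "A ^\<^sub>m 0 = 1\<^sub>m n"
    using assms by (auto simp: denom_dvd_mat_def)
  then show ?case by (auto simp: denom_dvd_mat_def)
next
  case (Suc m)
  then show ?case
    using denom_dvd_mat_mult[OF Suc assms] by (simp add: mult.commute)
qed

lemma denom_dvd_mat_minus_one:
  assumes "denom_dvd_mat n D A"
  shows "denom_dvd_mat n D (A - 1\<^sub>m n)"
proof -
  have "of_nat D * (A - 1\<^sub>m n) $$ (i, j) = of_nat D * A $$ (i, j) - of_nat D * (if i = j then 1 else 0)"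
    if "i < n" "j < n" for i j
    using assms that by (auto simp: denom_dvd_mat_def algebra_simps)
  then show ?thesis
    using assms unfolding denom_dvd_mat_def by (auto intro!: Ints_diff)
qed

lemma Ints_nonzero_norm_ge1:
  fixes x :: "'a::real_normed_algebra_1"
  assumes "x \<in> \<int>" and "x \<noteq> 0"
  shows "1 \<le> norm x"
  using assms by (auto elim!: Ints_cases)

lemma denom_dvd_mat_nonzero_entry:
  assumes "denom_dvd_mat n D A" and "i < n" and "j < n" and "A $$ (i, j) \<noteq> 0" and "D > 0"
  shows "1 \<le> real D * norm (A $$ (i, j))"
proof -
  have "1 \<le> norm (of_nat D * A $$ (i, j))"
    using assms by (intro Ints_nonzero_norm_ge1) (auto simp: denom_dvd_mat_def)
  then show ?thesis
    by (simp add: norm_mult)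
qed

lemma norm_coeff_prod_linear_factors_le:
  fixes es :: "complex list"
  assumes "\<And>e. e \<in> set es \<Longrightarrow> norm e \<le> R" and "R \<ge> 0"
  shows "norm (coeff (\<Prod>e\<leftarrow>es. [:- e, 1:]) j) \<le> (1 + R) ^ length es"
  using assms
proof (induct es arbitrary: j)
  case Nil
  then show ?case by (cases j) auto
next
  case (Cons e es)
  let ?p = "\<Prod>e\<leftarrow>es. [:- e, 1:]"
  have IH: "norm (coeff ?p i) \<le> (1 + R) ^ length es" for i
    using Cons by auto
  have "coeff ([:- e, 1:] * ?p) j = - e * coeff ?p j + (case j of 0 \<Rightarrow> 0 | Suc i \<Rightarrow> coeff ?p i)"
    by (simp add: mult_poly_add_left coeff_pCons split: nat.split)
  then have "norm (coeff ([:- e, 1:] * ?p) j)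
      \<le> norm (- e * coeff ?p j) + norm (case j of 0 \<Rightarrow> 0 | Suc i \<Rightarrow> coeff ?p i)"
    by (simp only: norm_triangle_ineq)
  moreover have "norm (case j of 0 \<Rightarrow> 0 | Suc i \<Rightarrow> coeff ?p i) \<le> (1 + R) ^ length es"
    using IH Cons.prems by (cases j) auto
  moreover have "norm (- e * coeff ?p j) \<le> R * (1 + R) ^ length es"
    using IH[of j] Cons.prems by (auto simp: norm_mult intro: mult_mono)
  ultimately have "norm (coeff ([:- e, 1:] * ?p) j) \<le> R * (1 + R) ^ length es + (1 + R) ^ length es"
    by linarith
  then show ?case by (simp add: algebra_simps)
qed

lemma norm_coeff_char_poly_le:
  fixes A :: "complex mat"
  assumes A: "A \<in> carrier_mat n n" and "R \<ge> 0" and bound: "\<And>\<nu>. eigenvalue A \<nu> \<Longrightarrow> norm \<nu> \<le> R"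
  shows "norm (coeff (char_poly A) j) \<le> (1 + R) ^ n"
proof -
  obtain es where es: "char_poly A = (\<Prod>a\<leftarrow>es. [:- a, 1:])" and "length es = n"
    using char_poly_factorized[OF A] by blast
  have "norm e \<le> R" if "e \<in> set es" for e
    using bound linear_poly_root[OF that] es eigenvalue_root_char_poly[OF A] by metis
  then show ?thesis
    using norm_coeff_prod_linear_factors_le[of es R j] \<open>R \<ge> 0\<close> \<open>length es = n\<close> es by simp
qed

lemma finite_bounded_int_polys:
  "finite {q :: int poly. degree q \<le> k \<and> (\<forall>j. \<bar>coeff q j\<bar> \<le> C)}"
proof -
  let ?S = "{q :: int poly. degree q \<le> k \<and> (\<forall>j. \<bar>coeff q j\<bar> \<le> C)}"
  let ?L = "{xs. set xs \<subseteq> {-C..C} \<and> length xs = Suc k}"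
  let ?f = "\<lambda>q::int poly. map (coeff q) [0..<Suc k]"
  have inj: "inj_on ?f ?S"
  proof (rule inj_onI, rule poly_eqI)
    fix p q j assume p: "p \<in> ?S" and q: "q \<in> ?S" and eq: "?f p = ?f q"
    show "coeff p j = coeff q j"
    proof (cases "j \<le> k")
      case True
      then show ?thesis
        using arg_cong[OF eq, of "\<lambda>xs. xs ! j"] by (simp del: upt_Suc)
    next
      case False
      then show ?thesis using p q by (simp add: coeff_eq_0)
    qed
  qed
  have "?f ` ?S \<subseteq> ?L"
    by (auto simp del: upt_Suc simp: abs_le_iff) (metis minus_le_iff)
  then have "finite (?f ` ?S)"
    by (rule finite_subset) (rule finite_lists_length_eq, simp)
  then show ?thesis
    using inj by (simp add: finite_image_iff)
qed

lemma denom_dvd_mat_eigenvalue_bounded_root: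
  assumes D: "D > 0" and R: "R \<ge> 0" and A: "denom_dvd_mat n D A"
    and bound: "\<And>\<nu>. eigenvalue A \<nu> \<Longrightarrow> norm \<nu> \<le> R" and "eigenvalue A \<mu>"
  obtains q :: "int poly" where "q \<noteq> 0" and "degree q \<le> n"
    and "\<And>j. \<bar>coeff q j\<bar> \<le> \<lceil>(1 + real D * R) ^ n\<rceil>"
    and "poly (of_int_poly q) (of_nat D * \<mu>) = 0"
proof -
  have A_carrier: "A \<in> carrier_mat n n"
    using A unfolding denom_dvd_mat_def by auto
  obtain M where M: "M \<in> carrier_mat n n" and DA: "of_nat D \<cdot>\<^sub>m A = map_mat of_int M"
    using denom_dvd_matE[OF A] .
  have DA_carrier: "of_nat D \<cdot>\<^sub>m A \<in> carrier_mat n n"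
    using A_carrier by simp
  define q where "q = char_poly M"
  have char_DA: "char_poly (of_nat D \<cdot>\<^sub>m A) = of_int_poly q"
    unfolding q_def DA using of_int_hom.char_poly_hom[OF M] by simp
  have "norm e \<le> real D * R" if "eigenvalue (of_nat D \<cdot>\<^sub>m A) e" for e
    using that bound[of "e / of_nat D"] D
    by (simp add: eigenvalue_smult_mat_iff[OF A_carrier] norm_divide field_simps)
  from norm_coeff_char_poly_le[OF DA_carrier _ this] R
  have coeff_bound: "\<bar>real_of_int (coeff q j)\<bar> \<le> (1 + real D * R) ^ n" for j
    by (simp add: char_DA coeff_map_poly)
  have "\<bar>coeff q j\<bar> \<le> \<lceil>(1 + real D * R) ^ n\<rceil>" for j
    unfolding le_ceiling_iff using coeff_bound[of j] by simp
  moreover have "q \<noteq> 0" and "degree q \<le> n"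
    using degree_monic_char_poly[OF M] unfolding q_def by auto
  moreover have "poly (of_int_poly q) (of_nat D * \<mu>) = 0"
    using eigenvalue_smult_mat[OF A_carrier \<open>eigenvalue A \<mu>\<close>, of "of_nat D"] char_DA
    by (simp add: eigenvalue_root_char_poly[OF DA_carrier])
  ultimately show ?thesis using that by blast
qed

lemma finite_eigenvalues_denom_dvd_bounded:
  assumes D: "D > 0" and R: "R \<ge> 0"
  shows "finite {\<mu>. \<exists>A. denom_dvd_mat n D A \<and> (\<forall>\<nu>. eigenvalue A \<nu> \<longrightarrow> norm \<nu> \<le> R) \<and> eigenvalue A \<mu>}"
    (is "finite ?F")
proof -
  define P where "P = {q :: int poly. degree q \<le> n \<and> (\<forall>j. \<bar>coeff q j\<bar> \<le> \<lceil>(1 + real D * R) ^ n\<rceil>)} - {0}"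
  define roots where "roots = (\<Union>q\<in>P. {x :: complex. poly (of_int_poly q) x = 0})"
  have "finite roots"
    unfolding roots_def P_def
    using finite_bounded_int_polys by (intro finite_UN_I) (auto intro: poly_roots_finite)
  moreover have "?F \<subseteq> (\<lambda>x. x / of_nat D) ` roots"
  proof
    fix \<mu> assume "\<mu> \<in> ?F"
    then obtain A where "denom_dvd_mat n D A" and "\<And>\<nu>. eigenvalue A \<nu> \<Longrightarrow> norm \<nu> \<le> R"
      and "eigenvalue A \<mu>"
      by blast
    from denom_dvd_mat_eigenvalue_bounded_root[OF D R this] obtain q where "q \<noteq> 0"
      and "degree q \<le> n" and "\<And>j. \<bar>coeff q j\<bar> \<le> \<lceil>(1 + real D * R) ^ n\<rceil>"
      and root: "poly (of_int_poly q) (of_nat D * \<mu>) = 0"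
      by blast
    then have "q \<in> P"
      unfolding P_def by blast
    with root have "of_nat D * \<mu> \<in> roots"
      unfolding roots_def by blast
    then show "\<mu> \<in> (\<lambda>x. x / of_nat D) ` roots"
      using D by (intro image_eqI[of _ _ "of_nat D * \<mu>"]) auto
  qed
  ultimately show ?thesis
    using finite_subset by blast
qed

lemma denom_dvd_mat_unimodular_eigenvalue_root_of_unity:
  assumes D: "D > 0" and pow: "\<And>m. denom_dvd_mat n D (A ^\<^sub>m m)"
    and unimodular: "\<And>\<nu>. eigenvalue A \<nu> \<Longrightarrow> norm \<nu> = 1" and \<mu>: "eigenvalue A \<mu>"
  shows "\<exists>t>0. \<mu> ^ t = 1"
proof -
  have A: "A \<in> carrier_mat n n"
    using pow[of 1] by (simp add: denom_dvd_mat_def)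
  let ?F = "{\<mu>. \<exists>A. denom_dvd_mat n D A \<and> (\<forall>\<nu>. eigenvalue A \<nu> \<longrightarrow> norm \<nu> \<le> 1) \<and> eigenvalue A \<mu>}"
  have "\<mu> ^ m \<in> ?F" for m
  proof -
    have "norm \<nu> \<le> 1" if "eigenvalue (A ^\<^sub>m m) \<nu>" for \<nu>
      using that unimodular by (auto simp: eigenvalue_pow_mat_iff[OF A] norm_power)
    then show ?thesis
      using pow[of m] eigenvalue_pow_mat[OF A \<mu>] by blast
  qed
  then have "finite (range (\<lambda>m. \<mu> ^ m))"
    by (intro finite_subset[OF _ finite_eigenvalues_denom_dvd_bounded[OF D, of 1]]) auto
  then obtain a b where "a < b" and "\<mu> ^ a = \<mu> ^ b"
    by (rule finite_range_imp_repeat)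
  then have "\<mu> ^ a * \<mu> ^ (b - a) = \<mu> ^ a * 1"
    by (metis le_add_diff_inverse less_imp_le mult.right_neutral power_add)
  moreover have "\<mu> \<noteq> 0"
    using unimodular[OF \<mu>] by auto
  ultimately have "\<mu> ^ (b - a) = 1"
    by simp
  then show ?thesis
    using \<open>a < b\<close> by (intro exI[of _ "b - a"]) auto
qed

section \<open>Unipotent roots\<close>

lemma unipotent_pow_minus_one_factor_step:
  fixes N S :: "'a::comm_ring_1 mat"
  assumes N: "N \<in> carrier_mat n n" and nil: "N ^\<^sub>m Suc j = 0\<^sub>m n n" and S: "S \<in> carrier_mat n n"
    and fac: "(1\<^sub>m n + N) ^\<^sub>m r - 1\<^sub>m n = N * S" and comm: "N * S = S * N"
    and top: "N ^\<^sub>m j * S = of_nat r \<cdot>\<^sub>m N ^\<^sub>m j"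
  defines "S' \<equiv> S * (1\<^sub>m n + N) + 1\<^sub>m n"
  shows "(1\<^sub>m n + N) ^\<^sub>m Suc r - 1\<^sub>m n = N * S'" and "N * S' = S' * N"
    and "N ^\<^sub>m j * S' = of_nat (Suc r) \<cdot>\<^sub>m N ^\<^sub>m j"
proof -
  define V where "V = 1\<^sub>m n + N"
  have V: "V \<in> carrier_mat n n" and Nj: "N ^\<^sub>m j \<in> carrier_mat n n"
    using N by (auto simp: V_def)
  have NS': "N * S' = N * S * V + N"
    using mult_add_distrib_mat[OF N mult_carrier_mat[OF S V] one_carrier_mat] N S V
    by (simp add: S'_def V_def assoc_mult_mat[of _ n n _ n _ n])
  have "V ^\<^sub>m r = (V ^\<^sub>m r - 1\<^sub>m n) + 1\<^sub>m n"
    using V by (auto intro!: eq_matI)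
  then have "V ^\<^sub>m Suc r = N * S * V + V"
    using fac[folded V_def] add_mult_distrib_mat[OF mult_carrier_mat[OF N S] one_carrier_mat V] V by simp
  then show "(1\<^sub>m n + N) ^\<^sub>m Suc r - 1\<^sub>m n = N * S'"
    using NS' N S V by (auto simp: V_def intro!: eq_matI)
  have "N * V = V * N"
    using mult_add_distrib_mat[OF N one_carrier_mat N] add_mult_distrib_mat[OF one_carrier_mat N N] N
    by (simp add: V_def)
  then have "N * S * V = S * V * N"
    using N S V comm by (simp add: assoc_mult_mat[of _ n n _ n _ n])
  then show "N * S' = S' * N"
    using NS' add_mult_distrib_mat[OF mult_carrier_mat[OF S V] one_carrier_mat N] N
    by (simp add: S'_def V_def)
  have "N ^\<^sub>m j * V = N ^\<^sub>m j"
    using mult_add_distrib_mat[OF Nj one_carrier_mat N] nil Nj right_mult_one_mat[OF Nj]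
    by (simp add: V_def)
  then have "N ^\<^sub>m j * S' = of_nat r \<cdot>\<^sub>m N ^\<^sub>m j + N ^\<^sub>m j"
    using mult_add_distrib_mat[OF Nj mult_carrier_mat[OF S V] one_carrier_mat] top Nj S V
      right_mult_one_mat[OF Nj]
    by (simp add: S'_def V_def assoc_mult_mat[of _ n n _ n _ n, symmetric] mult_smult_assoc_mat)
  then show "N ^\<^sub>m j * S' = of_nat (Suc r) \<cdot>\<^sub>m N ^\<^sub>m j"
    using Nj by (auto simp: algebra_simps intro!: eq_matI)
qed

lemma unipotent_pow_minus_one_factor:
  fixes N :: "'a::comm_ring_1 mat"
  assumes N: "N \<in> carrier_mat n n" and nil: "N ^\<^sub>m Suc j = 0\<^sub>m n n"
  shows "\<exists>S \<in> carrier_mat n n. (1\<^sub>m n + N) ^\<^sub>m r - 1\<^sub>m n = N * S \<and> N * S = S * N \<and>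
           N ^\<^sub>m j * S = of_nat r \<cdot>\<^sub>m N ^\<^sub>m j"
proof (induct r)
  \<comment> \<open>The witness is \<open>S = (\<Sum>i<r. (1 + N) ^ i)\<close>, built up by \<open>S \<mapsto> S * (1 + N) + 1\<close>.\<close>
  case 0
  have "(1\<^sub>m n + N) ^\<^sub>m 0 - 1\<^sub>m n = N * 0\<^sub>m n n" and "N * 0\<^sub>m n n = 0\<^sub>m n n * N"
    and "N ^\<^sub>m j * 0\<^sub>m n n = of_nat 0 \<cdot>\<^sub>m N ^\<^sub>m j"
    using N by (auto intro!: eq_matI simp del: pow_mat_dim)
  then show ?case
    by (intro bexI[of _ "0\<^sub>m n n"]) auto
next
  case (Suc r)
  then obtain S where "S \<in> carrier_mat n n" and "(1\<^sub>m n + N) ^\<^sub>m r - 1\<^sub>m n = N * S"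
    and "N * S = S * N" and "N ^\<^sub>m j * S = of_nat r \<cdot>\<^sub>m N ^\<^sub>m j"
    by blast
  from unipotent_pow_minus_one_factor_step[OF N nil this] \<open>S \<in> carrier_mat n n\<close> show ?case
    by (intro bexI[of _ "S * (1\<^sub>m n + N) + 1\<^sub>m n"]) auto
qed

lemma unipotent_pow_minus_one_pow:
  fixes N :: "'a::comm_ring_1 mat"
  assumes N: "N \<in> carrier_mat n n" and nil: "N ^\<^sub>m Suc j = 0\<^sub>m n n"
  shows "((1\<^sub>m n + N) ^\<^sub>m r - 1\<^sub>m n) ^\<^sub>m j = (of_nat r ^ j) \<cdot>\<^sub>m N ^\<^sub>m j"
proof -
  obtain S where S: "S \<in> carrier_mat n n" and fac: "(1\<^sub>m n + N) ^\<^sub>m r - 1\<^sub>m n = N * S"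
    and comm: "N * S = S * N" and top: "N ^\<^sub>m j * S = of_nat r \<cdot>\<^sub>m N ^\<^sub>m j"
    using unipotent_pow_minus_one_factor[OF N nil] by blast
  have Nj: "N ^\<^sub>m j \<in> carrier_mat n n"
    using N by simp
  have "N ^\<^sub>m j * S ^\<^sub>m m = (of_nat r ^ m) \<cdot>\<^sub>m N ^\<^sub>m j" for m
  proof (induct m)
    case 0
    have "N ^\<^sub>m j * S ^\<^sub>m 0 = N ^\<^sub>m j"
      using right_mult_one_mat[OF Nj] S by simp
    then show ?case using Nj by (auto intro!: eq_matI)
  next
    case (Suc m)
    have "N ^\<^sub>m j * S ^\<^sub>m Suc m = (N ^\<^sub>m j * S ^\<^sub>m m) * S"
      using Nj S by (simp add: assoc_mult_mat[of _ n n _ n _ n])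
    also have "\<dots> = (of_nat r ^ m) \<cdot>\<^sub>m (N ^\<^sub>m j * S)"
      using Suc Nj S by (simp add: mult_smult_assoc_mat[of _ n n])
    also have "\<dots> = (of_nat r ^ Suc m) \<cdot>\<^sub>m N ^\<^sub>m j"
      using top Nj by (auto simp: ac_simps intro!: eq_matI)
    finally show ?case .
  qed
  moreover have "((1\<^sub>m n + N) ^\<^sub>m r - 1\<^sub>m n) ^\<^sub>m j = N ^\<^sub>m j * S ^\<^sub>m j"
    unfolding fac by (rule mult_pow_mat_commute[OF N S comm])
  ultimately show ?thesis by simp
qed

lemma nilpotent_mat_last_nonzero_pow:
  assumes N: "N \<in> carrier_mat n n" and "N \<noteq> 0\<^sub>m n n" and "N ^\<^sub>m n = 0\<^sub>m n n"
  obtains j where "1 \<le> j" and "j < n" and "N ^\<^sub>m j \<noteq> 0\<^sub>m n n" and "N ^\<^sub>m Suc j = 0\<^sub>m n n"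
proof -
  have "n > 0"
  proof (rule ccontr)
    assume "\<not> n > 0"
    then have "N = 0\<^sub>m n n"
      using N by (intro eq_matI) auto
    with assms(2) show False by simp
  qed
  then have "(N ^\<^sub>m 0) $$ (0, 0) \<noteq> 0\<^sub>m n n $$ (0, 0)"
    using N by simp
  then have "N ^\<^sub>m 0 \<noteq> 0\<^sub>m n n"
    by auto
  then obtain j where "j < n" and below: "\<forall>i\<le>j. N ^\<^sub>m i \<noteq> 0\<^sub>m n n" and "N ^\<^sub>m Suc j = 0\<^sub>m n n"
    using ex_least_nat_less[of "\<lambda>i. N ^\<^sub>m i = 0\<^sub>m n n" n] assms(3) by blast
  moreover have "N ^\<^sub>m Suc 0 = N"
    using N by (simp add: carrier_matD(1))
  then have "j \<noteq> 0"
    using \<open>N ^\<^sub>m Suc j = 0\<^sub>m n n\<close> assms(2) by auto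
  ultimately show ?thesis
    using that[of j] by auto
qed

lemma unipotent_pow_entry_growth:
  assumes D: "D > 0" and V: "denom_dvd_mat n D V" and nil: "(V - 1\<^sub>m n) ^\<^sub>m n = 0\<^sub>m n n"
    and "V \<noteq> 1\<^sub>m n"
  obtains j a b where "1 \<le> j" and "j < n" and "a < n" and "b < n"
    and "(real r / real D) ^ j \<le> norm (((V ^\<^sub>m r - 1\<^sub>m n) ^\<^sub>m j) $$ (a, b))"
proof -
  define N where "N = V - 1\<^sub>m n"
  have N: "N \<in> carrier_mat n n"
    unfolding N_def by (rule minus_carrier_mat[OF one_carrier_mat])
  have VN: "V = 1\<^sub>m n + N"
    using V unfolding N_def denom_dvd_mat_def by (auto intro!: eq_matI)
  then have "N \<noteq> 0\<^sub>m n n"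
    using \<open>V \<noteq> 1\<^sub>m n\<close> by auto
  then obtain j where j: "1 \<le> j" "j < n" and Nj: "N ^\<^sub>m j \<noteq> 0\<^sub>m n n"
    and nil_j: "N ^\<^sub>m Suc j = 0\<^sub>m n n"
    using nilpotent_mat_last_nonzero_pow[OF N] nil unfolding N_def by blast
  have "\<exists>a b. a < n \<and> b < n \<and> (N ^\<^sub>m j) $$ (a, b) \<noteq> 0"
  proof (rule ccontr)
    assume "\<not> ?thesis"
    then have "N ^\<^sub>m j = 0\<^sub>m n n"
      using N by (intro eq_matI) auto
    with Nj show False ..
  qed
  then obtain a b where ab: "a < n" "b < n" and nz: "(N ^\<^sub>m j) $$ (a, b) \<noteq> 0"
    by blast
  have "denom_dvd_mat n (D ^ j) (N ^\<^sub>m j)"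
    unfolding N_def by (rule denom_dvd_mat_pow[OF denom_dvd_mat_minus_one[OF V]])
  from denom_dvd_mat_nonzero_entry[OF this ab nz] D
  have "1 \<le> real D ^ j * norm ((N ^\<^sub>m j) $$ (a, b))"
    by simp
  from mult_left_mono[OF this, of "real r ^ j"]
  have "(real r / real D) ^ j \<le> real r ^ j * norm ((N ^\<^sub>m j) $$ (a, b))"
    using D by (simp add: power_divide divide_le_eq ac_simps)
  also have "\<dots> = norm (((V ^\<^sub>m r - 1\<^sub>m n) ^\<^sub>m j) $$ (a, b))"
    using unipotent_pow_minus_one_pow[OF N nil_j, of r] VN ab N
    by (simp add: norm_mult norm_power)
  finally show ?thesis
    using that j ab by blast
qed

lemma large_unipotent_roots_trivial:
  assumes D: "D > 0" and U: "U \<in> carrier_mat n n"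
  obtains B where "\<And>V r. denom_dvd_mat n D V \<Longrightarrow> (V - 1\<^sub>m n) ^\<^sub>m n = 0\<^sub>m n n \<Longrightarrow>
    V ^\<^sub>m r = U \<Longrightarrow> B < r \<Longrightarrow> V = 1\<^sub>m n"
proof -
  obtain C where C0: "0 \<le> C"
    and C: "\<And>j a b. j \<le> n \<Longrightarrow> a < n \<Longrightarrow> b < n \<Longrightarrow> norm (((U - 1\<^sub>m n) ^\<^sub>m j) $$ (a, b)) \<le> C"
  proof -
    define T where "T = (\<lambda>(j, a, b). norm (((U - 1\<^sub>m n) ^\<^sub>m j) $$ (a, b))) ` ({..n} \<times> {..<n} \<times> {..<n})"
    have "finite (insert 0 T)"
      by (simp add: T_def)
    then show ?thesis
      by (intro that[of "Max (insert 0 T)"] Max_ge) (fastforce simp: T_def image_iff)+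
  qed
  show ?thesis
  proof (rule that[of "nat \<lceil>real D * (C + 1)\<rceil>"])
    fix V r
    assume V: "denom_dvd_mat n D V" and nil: "(V - 1\<^sub>m n) ^\<^sub>m n = 0\<^sub>m n n"
      and root: "V ^\<^sub>m r = U" and r: "nat \<lceil>real D * (C + 1)\<rceil> < r"
    have large: "C + 1 < real r / real D"
      using r D by (simp add: field_simps) linarith
    show "V = 1\<^sub>m n"
    proof (rule ccontr)
      assume "V \<noteq> 1\<^sub>m n"
      then obtain j a b where j: "1 \<le> j" "j < n" and ab: "a < n" "b < n"
        and grow: "(real r / real D) ^ j \<le> norm (((V ^\<^sub>m r - 1\<^sub>m n) ^\<^sub>m j) $$ (a, b))"
        using unipotent_pow_entry_growth[OF D V nil] by blast
      have "real r / real D \<le> (real r / real D) ^ j"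
        using power_increasing[of 1 j "real r / real D"] large j C0 by simp
      also have "\<dots> \<le> C"
        using grow C[of j a b] j ab root by simp
      finally show False
        using large by linarith
    qed
  qed
qed

section \<open>Matrices with roots of unbounded order\<close>

lemma eventually_pow_escapes:
  fixes x R :: real
  assumes "0 \<le> x" and "R > 0" and r: "filterlim r at_top sequentially"
  shows "eventually (\<lambda>i. x = 1 \<or> R < x ^ r i \<or> R * x ^ r i < 1) sequentially"
proof -
  have small: "eventually (\<lambda>i. y ^ r i < 1 / R) sequentially" if "0 \<le> y" "y < 1" for y :: real
    using order_tendstoD(2)[OF filterlim_compose[OF LIMSEQ_realpow_zero[OF that] r]] \<open>R > 0\<close>
    by simp
  consider (below) "x < 1" | (one) "x = 1" | (above) "x > 1"
    by linarith
  then show ?thesis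
  proof cases
    case below
    show ?thesis
      using small[OF \<open>0 \<le> x\<close> below] by eventually_elim (use \<open>R > 0\<close> in \<open>simp add: field_simps\<close>)
  next
    case above
    then have "0 \<le> 1 / x" "1 / x < 1" by simp_all
    from small[OF this] show ?thesis
      by eventually_elim (use \<open>R > 0\<close> above in \<open>simp add: power_one_over field_simps\<close>)
  qed simp
qed

lemma eigenvalue_root_norm_bounds:
  fixes W :: "complex mat"
  assumes W: "W \<in> carrier_mat n n" and root: "W ^\<^sub>m r = Z"
    and Zi: "Zi \<in> carrier_mat n n" and inv: "Zi * Z = 1\<^sub>m n"
    and RZ: "\<And>x. eigenvalue Z x \<Longrightarrow> norm x \<le> R" and RZi: "\<And>x. eigenvalue Zi x \<Longrightarrow> norm x \<le> R"
    and "eigenvalue W \<mu>"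
  shows "norm \<mu> ^ r \<le> R" and "1 \<le> R * norm \<mu> ^ r"
proof -
  have Z: "Z \<in> carrier_mat n n"
    using W root by auto
  have ev: "eigenvalue Z (\<mu> ^ r)"
    using eigenvalue_pow_mat[OF W \<open>eigenvalue W \<mu>\<close>, of r] root by simp
  then show "norm \<mu> ^ r \<le> R"
    using RZ[OF ev] by (simp add: norm_power)
  have "norm (1 / \<mu> ^ r) \<le> R"
    using RZi eigenvalue_left_inverse_mat(2)[OF Z Zi inv ev] by blast
  moreover have "0 < norm \<mu> ^ r"
    using eigenvalue_left_inverse_mat(1)[OF Z Zi inv ev] by (simp add: norm_power[symmetric])
  ultimately show "1 \<le> R * norm \<mu> ^ r"
    by (simp add: norm_divide norm_power divide_le_eq mult.commute)
qed

lemma eventually_unimodular_spectrum: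
  fixes W :: "nat \<Rightarrow> complex mat"
  assumes D: "D > 0" and W: "\<And>i. denom_dvd_mat n D (W i)" and R: "R \<ge> 1"
    and bounds: "\<And>i \<mu>. eigenvalue (W i) \<mu> \<Longrightarrow> norm \<mu> ^ r i \<le> R \<and> 1 \<le> R * norm \<mu> ^ r i"
    and r: "filterlim r at_top sequentially"
  shows "eventually (\<lambda>i. \<forall>\<mu>. eigenvalue (W i) \<mu> \<longrightarrow> norm \<mu> = 1) sequentially"
proof -
  define F where "F = {\<mu>. \<exists>A. denom_dvd_mat n D A \<and> (\<forall>\<nu>. eigenvalue A \<nu> \<longrightarrow> norm \<nu> \<le> R) \<and> eigenvalue A \<mu>}"
  have "finite F"
    unfolding F_def using finite_eigenvalues_denom_dvd_bounded[OF D] R by simp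
  have bounded: "norm \<mu> \<le> R" if "1 \<le> r i" and \<mu>: "eigenvalue (W i) \<mu>" for i \<mu>
  proof (rule ccontr)
    assume "\<not> norm \<mu> \<le> R"
    then have "R < norm \<mu> ^ 1" by simp
    also have "\<dots> \<le> norm \<mu> ^ r i"
      using that R \<open>\<not> norm \<mu> \<le> R\<close> by (intro power_increasing) auto
    finally show False
      using bounds[OF \<mu>] by simp
  qed
  have escape: "eventually (\<lambda>i. norm \<mu> = 1 \<or> R < norm \<mu> ^ r i \<or> R * norm \<mu> ^ r i < 1) sequentially"
    for \<mu> :: complex
    using eventually_pow_escapes[of "norm \<mu>" R r] R r by simp
  have "eventually (\<lambda>i. 1 \<le> r i) sequentially"
    using r by (simp add: filterlim_at_top)
  moreover have "eventually (\<lambda>i. \<forall>\<mu>\<in>F. norm \<mu> = 1 \<or> R < norm \<mu> ^ r i \<or> R * norm \<mu> ^ r i < 1) sequentially"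
    using \<open>finite F\<close> escape by (intro eventually_ball_finite) auto
  ultimately show ?thesis
  proof eventually_elim
    case (elim i)
    show ?case
    proof (intro allI impI)
      fix \<mu> assume \<mu>: "eigenvalue (W i) \<mu>"
      then have "\<mu> \<in> F"
        using W bounded elim(1) unfolding F_def by blast
      then show "norm \<mu> = 1"
        using elim(2) bounds[OF \<mu>] by force
    qed
  qed
qed

lemma eventually_unimodular_spectrum_of_roots:
  fixes W :: "nat \<Rightarrow> complex mat"
  assumes D: "D > 0" and W: "\<And>i. denom_dvd_mat n D (W i)"
    and Zi: "Zi \<in> carrier_mat n n" and inv: "Zi * Z = 1\<^sub>m n"
    and root: "\<And>i. W i ^\<^sub>m r i = Z" and r: "filterlim r at_top sequentially"
  shows "eventually (\<lambda>i. \<forall>\<mu>. eigenvalue (W i) \<mu> \<longrightarrow> norm \<mu> = 1) sequentially"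
proof -
  have Wc: "W i \<in> carrier_mat n n" for i
    using W by (simp add: denom_dvd_mat_def)
  then have Z: "Z \<in> carrier_mat n n"
    using root[of 0] by auto
  obtain R1 R2 where "R1 \<ge> 1" "\<And>x. eigenvalue Z x \<Longrightarrow> norm x \<le> R1"
    and "\<And>x. eigenvalue Zi x \<Longrightarrow> norm x \<le> R2"
    using eigenvalues_norm_bounded[OF Z] eigenvalues_norm_bounded[OF Zi] by metis
  then have R: "max R1 R2 \<ge> 1" and RZ: "\<And>x. eigenvalue Z x \<Longrightarrow> norm x \<le> max R1 R2"
    and RZi: "\<And>x. eigenvalue Zi x \<Longrightarrow> norm x \<le> max R1 R2"
    by force+
  show ?thesis
    using eigenvalue_root_norm_bounds[OF Wc root Zi inv RZ RZi]
    by (intro eventually_unimodular_spectrum[OF D W R _ r]) blast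
qed

lemma unimodular_spectra_common_exponent:
  fixes W :: "nat \<Rightarrow> complex mat"
  assumes D: "D > 0" and W: "\<And>i m. denom_dvd_mat n D (W i ^\<^sub>m m)"
  obtains N where "N > 0"
    and "\<forall>i \<mu>. (\<forall>\<nu>. eigenvalue (W i) \<nu> \<longrightarrow> norm \<nu> = 1) \<longrightarrow> eigenvalue (W i) \<mu> \<longrightarrow> \<mu> ^ N = 1"
proof -
  have W1: "denom_dvd_mat n D (W i)" for i
    using W[of i 1] by (simp add: denom_dvd_mat_def)
  define F where "F = {\<mu>. \<exists>i. (\<forall>\<nu>. eigenvalue (W i) \<nu> \<longrightarrow> norm \<nu> = 1) \<and> eigenvalue (W i) \<mu>}"
  have "F \<subseteq> {\<mu>. \<exists>A. denom_dvd_mat n D A \<and> (\<forall>\<nu>. eigenvalue A \<nu> \<longrightarrow> norm \<nu> \<le> 1) \<and> eigenvalue A \<mu>}"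
    unfolding F_def using W1 by fastforce
  then have "finite F"
    by (rule finite_subset) (rule finite_eigenvalues_denom_dvd_bounded[OF D], simp)
  moreover have "\<exists>t>0. \<mu> ^ t = 1" if "\<mu> \<in> F" for \<mu>
    using that denom_dvd_mat_unimodular_eigenvalue_root_of_unity[OF D W] unfolding F_def by blast
  ultimately obtain N where "N > 0" and "\<And>\<mu>. \<mu> \<in> F \<Longrightarrow> \<mu> ^ N = 1"
    using finite_roots_of_unity_common_exponent by blast
  then show ?thesis
    using that unfolding F_def by blast
qed

lemma finite_order_if_roots_of_unbounded_order:
  fixes W :: "nat \<Rightarrow> complex mat"
  assumes D: "D > 0" and W: "\<And>i m. denom_dvd_mat n D (W i ^\<^sub>m m)"
    and Zi: "Zi \<in> carrier_mat n n" and inv: "Zi * Z = 1\<^sub>m n"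
    and root: "\<And>i. W i ^\<^sub>m r i = Z" and r: "filterlim r at_top sequentially"
  obtains m where "m > 0" and "Z ^\<^sub>m m = 1\<^sub>m n"
proof -
  have Wc: "W i \<in> carrier_mat n n" for i
    using W[of i 1] by (simp add: denom_dvd_mat_def)
  then have W1: "denom_dvd_mat n D (W i)" for i
    using W[of i 1] by simp
  have Z: "Z \<in> carrier_mat n n"
    using root[of 0] Wc[of 0] by auto
  obtain N where "N > 0" and roots: "\<forall>i \<mu>. (\<forall>\<nu>. eigenvalue (W i) \<nu> \<longrightarrow> norm \<nu> = 1) \<longrightarrow>
      eigenvalue (W i) \<mu> \<longrightarrow> \<mu> ^ N = 1"
    using unimodular_spectra_common_exponent[where W = W, OF D W] by blast
  obtain B where B: "\<And>V r. denom_dvd_mat n D V \<Longrightarrow> (V - 1\<^sub>m n) ^\<^sub>m n = 0\<^sub>m n n \<Longrightarrow>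
      V ^\<^sub>m r = Z ^\<^sub>m N \<Longrightarrow> B < r \<Longrightarrow> V = 1\<^sub>m n"
    using large_unipotent_roots_trivial[OF D pow_carrier_mat[OF Z]] by blast
  have "eventually (\<lambda>i. Suc B \<le> r i) sequentially"
    using r by (simp add: filterlim_at_top)
  with eventually_unimodular_spectrum_of_roots[OF D W1 Zi inv root r]
  have "eventually (\<lambda>i. (\<forall>\<mu>. eigenvalue (W i) \<mu> \<longrightarrow> norm \<mu> = 1) \<and> Suc B \<le> r i) sequentially"
    by (rule eventually_conj)
  then obtain i where unimodular: "\<forall>\<mu>. eigenvalue (W i) \<mu> \<longrightarrow> norm \<mu> = 1" and "B < r i"
    unfolding eventually_sequentially by auto
  have nil: "(W i ^\<^sub>m N - 1\<^sub>m n) ^\<^sub>m n = 0\<^sub>m n n"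
    using roots unimodular by (intro pow_mat_minus_one_nilpotent[OF Wc]) blast
  have "(W i ^\<^sub>m N) ^\<^sub>m r i = W i ^\<^sub>m (r i * N)"
    by (simp add: pow_mat_mult[OF Wc, symmetric] mult.commute)
  then have root_N: "(W i ^\<^sub>m N) ^\<^sub>m r i = Z ^\<^sub>m N"
    by (simp add: pow_mat_mult[OF Wc] root)
  then have "Z ^\<^sub>m N = 1\<^sub>m n"
    using B[OF W nil root_N \<open>B < r i\<close>] by simp
  with \<open>N > 0\<close> show ?thesis
    by (rule that)
qed

section \<open>Integer linear combinations in abelian groups\<close>

lemma (in comm_group) finprod_int_pow:
  assumes "f \<in> A \<rightarrow> carrier G"
  shows "finprod G f A [^] (m::int) = finprod G (\<lambda>a. f a [^] m) A"
  using assms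
proof (induct A rule: infinite_finite_induct)
  case (insert a A)
  then have "f a \<in> carrier G" and "f \<in> A \<rightarrow> carrier G"
    by auto
  with insert show ?case
    by (simp add: int_pow_distrib Pi_def)
qed simp_all

lemma (in comm_group) hom_finprod:
  assumes H: "comm_group H" and h: "h \<in> hom G H" and f: "f \<in> A \<rightarrow> carrier G"
  shows "h (finprod G f A) = finprod H (\<lambda>a. h (f a)) A"
proof -
  interpret H: comm_group H by (rule H)
  have h_one: "h \<one> = \<one>\<^bsub>H\<^esub>"
    by (rule hom_one[OF h is_group H.is_group])
  show ?thesis
    using f
  proof (induct A rule: infinite_finite_induct)
    case (insert a A)
    then have "f a \<in> carrier G" and "f \<in> A \<rightarrow> carrier G"
      by auto
    moreover have "(\<lambda>a. h (f a)) \<in> insert a A \<rightarrow> carrier H"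
      using h insert.prems by (auto simp: hom_def)
    ultimately show ?case
      using insert h by (simp add: hom_mult)
  qed (simp_all add: h_one)
qed

definition int_lincomb :: "('a, 'b) monoid_scheme \<Rightarrow> 'a list \<Rightarrow> (nat \<Rightarrow> int) \<Rightarrow> 'a" where
  "int_lincomb G bs c = finprod G (\<lambda>j. bs ! j [^]\<^bsub>G\<^esub> c j) {..<length bs}"

definition int_independent :: "('a, 'b) monoid_scheme \<Rightarrow> 'a list \<Rightarrow> bool" where
  "int_independent G bs \<longleftrightarrow> (\<forall>c. int_lincomb G bs c = \<one>\<^bsub>G\<^esub> \<longrightarrow> (\<forall>j<length bs. c j = 0))"

context comm_group
begin

lemma nth_in_carrier: "set bs \<subseteq> carrier G \<Longrightarrow> j < length bs \<Longrightarrow> bs ! j \<in> carrier G"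
  using nth_mem by blast

lemma int_lincomb_Pi:
  "set bs \<subseteq> carrier G \<Longrightarrow> (\<lambda>j. bs ! j [^] (c j :: int)) \<in> {..<length bs} \<rightarrow> carrier G"
  by (auto simp: nth_in_carrier)

lemma int_lincomb_closed [simp]:
  "set bs \<subseteq> carrier G \<Longrightarrow> int_lincomb G bs c \<in> carrier G"
  unfolding int_lincomb_def using int_lincomb_Pi by (rule finprod_closed)

lemma int_lincomb_cong:
  assumes "set bs \<subseteq> carrier G" and "\<And>j. j < length bs \<Longrightarrow> c j = d j"
  shows "int_lincomb G bs c = int_lincomb G bs d"
  unfolding int_lincomb_def using assms by (intro finprod_cong') (auto simp: nth_in_carrier)

lemma int_lincomb_zero [simp]: "int_lincomb G bs (\<lambda>_. 0) = \<one>"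
  unfolding int_lincomb_def by simp

lemma int_lincomb_add:
  assumes "set bs \<subseteq> carrier G"
  shows "int_lincomb G bs (\<lambda>j. c j + d j) = int_lincomb G bs c \<otimes> int_lincomb G bs d"
proof -
  have "int_lincomb G bs (\<lambda>j. c j + d j) = finprod G (\<lambda>j. bs ! j [^] c j \<otimes> bs ! j [^] d j) {..<length bs}"
    unfolding int_lincomb_def using assms
    by (intro finprod_cong') (auto simp: int_pow_mult nth_in_carrier)
  also have "\<dots> = int_lincomb G bs c \<otimes> int_lincomb G bs d"
    unfolding int_lincomb_def using int_lincomb_Pi[OF assms] by (intro finprod_multf) auto
  finally show ?thesis .
qed

lemma int_lincomb_int_pow:
  assumes "set bs \<subseteq> carrier G"
  shows "int_lincomb G bs c [^] (m::int) = int_lincomb G bs (\<lambda>j. m * c j)"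
proof -
  have "int_lincomb G bs c [^] m = finprod G (\<lambda>j. (bs ! j [^] c j) [^] m) {..<length bs}"
    unfolding int_lincomb_def by (rule finprod_int_pow[OF int_lincomb_Pi[OF assms]])
  also have "\<dots> = int_lincomb G bs (\<lambda>j. m * c j)"
    unfolding int_lincomb_def using assms
    by (intro finprod_cong') (auto simp: int_pow_pow nth_in_carrier mult.commute)
  finally show ?thesis .
qed

lemma int_lincomb_int_pow_map:
  assumes bs: "set bs \<subseteq> carrier G"
  shows "int_lincomb G bs c [^] (m::int) = int_lincomb G (map (\<lambda>b. b [^] m) bs) c"
proof -
  have "int_lincomb G bs c [^] m = finprod G (\<lambda>j. (bs ! j [^] c j) [^] m) {..<length bs}"
    unfolding int_lincomb_def by (rule finprod_int_pow[OF int_lincomb_Pi[OF bs]])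
  also have "\<dots> = int_lincomb G (map (\<lambda>b. b [^] m) bs) c"
    unfolding int_lincomb_def using bs
    by (intro finprod_cong') (auto simp: int_pow_pow nth_in_carrier mult.commute)
  finally show ?thesis .
qed

lemma int_lincomb_single:
  assumes "set bs \<subseteq> carrier G" and "i < length bs"
  shows "int_lincomb G bs (\<lambda>j. if j = i then e else 0) = bs ! i [^] e"
proof -
  have "int_lincomb G bs (\<lambda>j. if j = i then e else 0)
      = finprod G (\<lambda>j. if j = i then bs ! j [^] e else \<one>) {..<length bs}"
    unfolding int_lincomb_def using assms by (intro finprod_cong') (auto simp: nth_in_carrier)
  also have "\<dots> = bs ! i [^] e"
    using assms by (intro finprod_singleton_swap) (auto simp: nth_in_carrier)
  finally show ?thesis .
qed

lemma int_lincomb_append: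
  assumes "set bs \<subseteq> carrier G" and "g \<in> carrier G"
  shows "int_lincomb G (bs @ [g]) c = g [^] c (length bs) \<otimes> int_lincomb G bs c"
proof -
  have "int_lincomb G (bs @ [g]) c
      = (bs @ [g]) ! length bs [^] c (length bs) \<otimes> finprod G (\<lambda>j. (bs @ [g]) ! j [^] c j) {..<length bs}"
    unfolding int_lincomb_def lessThan_Suc length_append_singleton using assms
    by (intro finprod_insert) (auto simp: nth_append nth_in_carrier)
  also have "finprod G (\<lambda>j. (bs @ [g]) ! j [^] c j) {..<length bs} = int_lincomb G bs c"
    unfolding int_lincomb_def using assms by (intro finprod_cong') (auto simp: nth_append nth_in_carrier)
  finally show ?thesis by simp
qed

lemma int_lincomb_finprod:
  assumes "set bs \<subseteq> carrier G" and "finite L"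
  shows "finprod G (\<lambda>l. int_lincomb G bs (\<phi> l) [^] (\<gamma> l :: int)) L
       = int_lincomb G bs (\<lambda>j. \<Sum>l\<in>L. \<gamma> l * \<phi> l j)"
  using assms(2)
proof (induct L rule: finite_induct)
  case (insert l L)
  then show ?case
    using assms(1) by (simp add: int_lincomb_int_pow int_lincomb_add[symmetric] Pi_def)
qed simp

lemma hom_int_lincomb:
  assumes H: "comm_group H" and h: "h \<in> hom G H" and bs: "set bs \<subseteq> carrier G"
  shows "h (int_lincomb G bs c) = int_lincomb H (map h bs) c"
proof -
  interpret H: comm_group H by (rule H)
  have "h (int_lincomb G bs c) = finprod H (\<lambda>j. h (bs ! j [^] c j)) {..<length bs}"
    unfolding int_lincomb_def by (rule hom_finprod[OF H h int_lincomb_Pi[OF bs]])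
  also have "\<dots> = int_lincomb H (map h bs) c"
    unfolding int_lincomb_def using bs
    by (intro H.finprod_cong')
      (auto simp: hom_int_pow[OF h _ is_group H.is_group] nth_in_carrier
        intro!: H.int_pow_closed hom_in_carrier[OF h] nth_in_carrier)
  finally show ?thesis .
qed

lemma int_independent_lincomb_inj:
  assumes "int_independent G bs" and bs: "set bs \<subseteq> carrier G"
    and eq: "int_lincomb G bs c = int_lincomb G bs d" and "j < length bs"
  shows "c j = d j"
proof -
  have "int_lincomb G bs (\<lambda>j. - d j) = inv (int_lincomb G bs d)"
    using int_lincomb_int_pow[OF bs, of d "- 1"] bs by (simp add: int_pow_neg)
  then have "int_lincomb G bs (\<lambda>j. c j - d j) = int_lincomb G bs c \<otimes> inv (int_lincomb G bs d)"
    using int_lincomb_add[OF bs, of c "\<lambda>j. - d j"] by simp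
  also have "\<dots> = \<one>"
    using eq bs by simp
  finally show ?thesis
    using assms(1,4) unfolding int_independent_def by fastforce
qed

lemma generate_int_lincomb:
  assumes ss: "set ss \<subseteq> carrier G" and "x \<in> generate G (set ss)"
  shows "\<exists>c. x = int_lincomb G ss c"
  using assms(2)
proof (induct rule: generate.induct)
  case one
  show ?case
    by (rule exI[of _ "\<lambda>_. 0"]) simp
next
  case (incl h)
  then obtain i where "i < length ss" "h = ss ! i"
    by (auto simp: in_set_conv_nth)
  then show ?case
    using int_lincomb_single[OF ss, of i 1] ss by (metis int_pow_1 nth_in_carrier)
next
  case (inv h)
  then obtain i where "i < length ss" "h = ss ! i"
    by (auto simp: in_set_conv_nth)
  then show ?case
    using int_lincomb_single[OF ss, of i "- 1"] ss by (metis int_pow_neg int_pow_1 nth_in_carrier)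
next
  case (eng h1 h2)
  then obtain c1 c2 where "h1 = int_lincomb G ss c1" and "h2 = int_lincomb G ss c2"
    by blast
  then show ?case
    using int_lincomb_add[OF ss, of c1 c2] by (intro exI[of _ "\<lambda>j. c1 j + c2 j"]) simp
qed

lemma int_independent_append_dependent:
  assumes indep: "int_independent G bs" and bs: "set bs \<subseteq> carrier G" and g: "g \<in> carrier G"
    and dep: "\<not> int_independent G (bs @ [g])"
  shows "\<exists>d>0. \<exists>c. g [^] int d = int_lincomb G bs c"
proof -
  obtain c where c1: "int_lincomb G (bs @ [g]) c = \<one>" and c2: "\<exists>j<Suc (length bs). c j \<noteq> 0"
    using dep unfolding int_independent_def by auto
  have eq: "g [^] c (length bs) \<otimes> int_lincomb G bs c = \<one>"
    using c1 int_lincomb_append[OF bs g] by simp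
  have ck: "c (length bs) \<noteq> 0"
  proof
    assume "c (length bs) = 0"
    then have "int_lincomb G bs c = \<one>"
      using eq bs by simp
    then have "\<forall>j<length bs. c j = 0"
      using indep unfolding int_independent_def by blast
    with c2 \<open>c (length bs) = 0\<close> show False
      by (auto simp: less_Suc_eq)
  qed
  have "g [^] c (length bs) = inv (int_lincomb G bs c)"
    using inv_equality[OF eq] bs g by simp
  also have "\<dots> = int_lincomb G bs (\<lambda>j. - c j)"
    using int_lincomb_int_pow[OF bs, of c "- 1"] bs by (simp add: int_pow_neg)
  finally have gc: "g [^] c (length bs) = int_lincomb G bs (\<lambda>j. - c j)" .
  define s where "s = sgn (c (length bs))"
  have abs_c: "int (nat \<bar>c (length bs)\<bar>) = c (length bs) * s"
    by (simp add: s_def abs_sgn[symmetric])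
  have "g [^] int (nat \<bar>c (length bs)\<bar>) = (g [^] c (length bs)) [^] s"
    unfolding abs_c by (rule int_pow_pow[OF g, symmetric])
  also have "\<dots> = int_lincomb G bs (\<lambda>j. s * - c j)"
    unfolding gc by (rule int_lincomb_int_pow[OF bs])
  finally show ?thesis
    using ck by (intro exI[of _ "nat \<bar>c (length bs)\<bar>"]) auto
qed

lemma maximal_independent_sublist:
  assumes "finite S"
  obtains bs where "set bs \<subseteq> S" and "int_independent G bs"
    and "\<And>g. g \<in> S \<Longrightarrow> g \<notin> set bs \<Longrightarrow> \<not> int_independent G (bs @ [g])"
proof -
  define P where "P bs \<longleftrightarrow> set bs \<subseteq> S \<and> distinct bs \<and> int_independent G bs" for bs
  have "P []"
    by (simp add: P_def int_independent_def)
  moreover have "\<forall>bs. P bs \<longrightarrow> length bs < Suc (card S)"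
    using assms by (auto simp: P_def distinct_card[symmetric] intro: card_mono le_imp_less_Suc)
  ultimately obtain bs where "P bs" and max: "\<And>bs'. P bs' \<Longrightarrow> length bs' \<le> length bs"
    using ex_has_greatest_nat[of P "[]" length] by metis
  have "\<not> int_independent G (bs @ [g])" if "g \<in> S" and "g \<notin> set bs" for g
    using max[of "bs @ [g]"] \<open>P bs\<close> that unfolding P_def by auto
  with \<open>P bs\<close> show ?thesis
    using that unfolding P_def by blast
qed

lemma common_pow_in_span:
  assumes S: "finite S" "S \<subseteq> carrier G" and bs: "set bs \<subseteq> carrier G"
    and pow: "\<And>g. g \<in> S \<Longrightarrow> \<exists>d>0. \<exists>c. g [^] int d = int_lincomb G bs c"
  obtains D where "D > 0" and "\<And>g. g \<in> S \<Longrightarrow> \<exists>c. g [^] int D = int_lincomb G bs c"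
proof -
  obtain d c where dc: "\<And>g. g \<in> S \<Longrightarrow> d g > 0 \<and> g [^] int (d g) = int_lincomb G bs (c g)"
    using pow by metis
  define D where "D = (\<Prod>g\<in>S. d g)"
  have "\<exists>c. g [^] int D = int_lincomb G bs c" if g: "g \<in> S" for g
  proof -
    obtain q where q: "D = d g * q"
      unfolding D_def using dvd_prodI[OF S(1) g] by (metis dvdE)
    have "g [^] int D = (g [^] int (d g)) [^] int q"
      using g S(2) by (auto simp: q int_pow_pow)
    also have "\<dots> = int_lincomb G bs (\<lambda>j. int q * c g j)"
      using dc[OF g] by (simp add: int_lincomb_int_pow[OF bs])
    finally show ?thesis by blast
  qed
  moreover have "D > 0"
    unfolding D_def using dc by (intro prod_pos) auto
  ultimately show ?thesis
    using that by blast
qed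

lemma generate_pow_in_span:
  assumes S: "S \<subseteq> carrier G" and bs: "set bs \<subseteq> carrier G"
    and gen: "\<And>g. g \<in> S \<Longrightarrow> \<exists>c. g [^] int D = int_lincomb G bs c"
    and "x \<in> generate G S"
  shows "\<exists>c. x [^] int D = int_lincomb G bs c"
  using assms(4)
proof (induct rule: generate.induct)
  case one
  show ?case
    by (rule exI[of _ "\<lambda>_. 0"]) simp
next
  case (incl h)
  then show ?case by (rule gen)
next
  case (inv h)
  then obtain c where c: "h [^] int D = int_lincomb G bs c"
    using gen by blast
  have "inv h [^] int D = inv (h [^] int D)"
    using inv S by (auto intro: int_pow_inv)
  also have "\<dots> = int_lincomb G bs (\<lambda>j. - c j)"
    using c int_lincomb_int_pow[OF bs, of c "- 1"] bs by (simp add: int_pow_neg)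
  finally show ?case by blast
next
  case (eng h1 h2)
  then obtain c1 c2 where c: "h1 [^] int D = int_lincomb G bs c1" "h2 [^] int D = int_lincomb G bs c2"
    by blast
  have "h1 \<in> carrier G" "h2 \<in> carrier G"
    using eng S generate_in_carrier by blast+
  then have "(h1 \<otimes> h2) [^] int D = h1 [^] int D \<otimes> h2 [^] int D"
    by (rule int_pow_distrib)
  also have "\<dots> = int_lincomb G bs (\<lambda>j. c1 j + c2 j)"
    using c by (simp add: int_lincomb_add[OF bs])
  finally show ?case by blast
qed

end

locale lattice_basis = comm_group M for M :: "('a, 'b) monoid_scheme" (structure) +
  fixes bs :: "'a list" and D :: nat
  assumes basis_carrier: "set bs \<subseteq> carrier M"
    and basis_independent: "int_independent M bs"
    and D_pos: "D > 0"
    and pow_D_in_span: "\<And>x. x \<in> carrier M \<Longrightarrow> \<exists>c. x [^] int D = int_lincomb M bs c"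

lemma (in comm_group) lattice_basis_exists:
  assumes S: "finite S" "S \<subseteq> carrier G" and gen: "generate G S = carrier G"
  obtains bs D where "lattice_basis G bs D"
proof -
  obtain bs where bs_S: "set bs \<subseteq> S" and "int_independent G bs"
    and max: "\<And>g. g \<in> S \<Longrightarrow> g \<notin> set bs \<Longrightarrow> \<not> int_independent G (bs @ [g])"
    using maximal_independent_sublist[OF S(1)] by metis
  have bs: "set bs \<subseteq> carrier G"
    using bs_S S(2) by blast
  have "\<exists>d>0. \<exists>c. g [^] int d = int_lincomb G bs c" if g: "g \<in> S" for g
  proof (cases "g \<in> set bs")
    case True
    then obtain i where "i < length bs" "g = bs ! i"
      by (auto simp: in_set_conv_nth)
    then have "g [^] int 1 = int_lincomb G bs (\<lambda>j. if j = i then 1 else 0)"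
      using int_lincomb_single[OF bs] bs by (simp add: nth_in_carrier)
    then show ?thesis by blast
  next
    case False
    then show ?thesis
      using int_independent_append_dependent[OF \<open>int_independent G bs\<close> bs _ max] g S(2) by blast
  qed
  then obtain D where "D > 0" and "\<And>g. g \<in> S \<Longrightarrow> \<exists>c. g [^] int D = int_lincomb G bs c"
    using common_pow_in_span[OF S bs] by blast
  then have "lattice_basis G bs D"
    using bs \<open>int_independent G bs\<close> gen generate_pow_in_span[OF S(2) bs] by unfold_locales auto
  then show ?thesis by (rule that)
qed

section \<open>Automorphisms of finite order\<close>

context group
begin

lemma AutoGroup_carrier [simp]: "carrier (AutoGroup G) = auto G"
  by (simp add: AutoGroup_def BijGroup_def)

lemma AutoGroup_one_apply: "x \<in> carrier G \<Longrightarrow> \<one>\<^bsub>AutoGroup G\<^esub> x = x"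
  by (simp add: AutoGroup_def BijGroup_def)

lemma AutoGroup_mult_apply:
  "f \<in> auto G \<Longrightarrow> g \<in> auto G \<Longrightarrow> x \<in> carrier G \<Longrightarrow> (f \<otimes>\<^bsub>AutoGroup G\<^esub> g) x = f (g x)"
  by (simp add: AutoGroup_def BijGroup_def auto_def compose_def)

lemma AutoGroup_pow_apply:
  assumes f: "f \<in> auto G" and x: "x \<in> carrier G"
  shows "(f [^]\<^bsub>AutoGroup G\<^esub> (m::nat)) x = (f ^^ m) x"
  using x
proof (induct m arbitrary: x)
  case (Suc m)
  have "f [^]\<^bsub>AutoGroup G\<^esub> m \<in> auto G"
    using monoid.nat_pow_closed[OF group.is_monoid[OF AutoGroup]] f by simp
  moreover have "f x \<in> carrier G"
    using f Suc.prems by (auto simp: auto_def hom_in_carrier)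
  ultimately show ?case
    using Suc f by (simp add: AutoGroup_mult_apply funpow_Suc_right del: funpow.simps)
qed (simp add: AutoGroup_one_apply)

lemma AutoGroup_eq_one:
  assumes "f \<in> auto G" and "\<And>x. x \<in> carrier G \<Longrightarrow> f x = x"
  shows "f = \<one>\<^bsub>AutoGroup G\<^esub>"
proof (rule extensionalityI)
  show "f \<in> extensional (carrier G)"
    using assms(1) by (simp add: auto_def Bij_def)
qed (auto simp: AutoGroup_def BijGroup_def assms(2))

end

lemma funpow_hom: "f \<in> hom G G \<Longrightarrow> f ^^ j \<in> hom G G"
proof (induct j)
  case (Suc j)
  show ?case
    by (rule homI) (use Suc in \<open>simp_all add: hom_in_carrier hom_mult\<close>)
qed (simp add: homI)

lemma (in comm_group) funpow_eq_id_if_displacement_fixed: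
  assumes g: "g \<in> hom G G"
    and fixed: "\<And>x. x \<in> carrier G \<Longrightarrow> g (g x \<otimes> inv x) = g x \<otimes> inv x"
    and torsion: "\<And>x. x \<in> carrier G \<Longrightarrow> (g x \<otimes> inv x) [^] n = \<one>"
    and x: "x \<in> carrier G"
  shows "(g ^^ n) x = x"
proof -
  define \<delta> where "\<delta> = g x \<otimes> inv x"
  have gx: "g x \<in> carrier G" and \<delta>: "\<delta> \<in> carrier G"
    using hom_in_carrier[OF g x] x by (auto simp: \<delta>_def)
  have g_eq: "g x = x \<otimes> \<delta>"
    using gx x m_lcomm[OF x gx inv_closed[OF x]] by (simp add: \<delta>_def)
  have g\<delta>: "g \<delta> = \<delta>"
    using fixed[OF x] by (simp add: \<delta>_def)
  have "(g ^^ j) x = x \<otimes> \<delta> [^] j" for j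
  proof (induct j)
    case (Suc j)
    have "(g ^^ Suc j) x = g x \<otimes> g \<delta> [^] j"
      using Suc x \<delta> g by (simp add: hom_mult hom_nat_pow[OF g _ is_group is_group])
    also have "\<dots> = x \<otimes> \<delta> [^] Suc j"
      using g\<delta> g_eq x \<delta> m_comm[OF \<delta> nat_pow_closed[OF \<delta>, of j]]
      by (simp add: m_assoc nat_pow_Suc2 del: nat_pow_Suc)
    finally show ?case .
  qed (use x in simp)
  then show ?thesis
    using torsion[OF x] x by (simp add: \<delta>_def)
qed

lemma (in comm_group) auto_finite_order_if_pow_fixed:
  assumes f: "f \<in> auto G" and "n > 0" and fin: "finite {t \<in> carrier G. t [^] n = \<one>}"
    and pow_fixed: "\<And>x. x \<in> carrier G \<Longrightarrow> f x [^] n = x [^] (n::nat)"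
  obtains m :: nat where "m > 0" and "f [^]\<^bsub>AutoGroup G\<^esub> m = \<one>\<^bsub>AutoGroup G\<^esub>"
proof -
  define T where "T = {t \<in> carrier G. t [^] n = \<one>}"
  have fh: "f \<in> hom G G" and "bij_betw f (carrier G) (carrier G)"
    using f by (auto simp: auto_def Bij_def)
  then have "inj_on f T"
    unfolding T_def by (auto intro: inj_on_subset bij_betw_imp_inj_on)
  moreover have "f ` T \<subseteq> T"
    using pow_fixed by (auto simp: T_def hom_in_carrier[OF fh])
  ultimately obtain a where "a > 0" and a: "\<And>t. t \<in> T \<Longrightarrow> (f ^^ a) t = t"
    using finite_inj_on_funpow_id[OF fin[folded T_def]] by blast
  define g where "g = f ^^ a"
  have gh: "(f ^^ j) \<in> hom G G" for j
    using fh by (rule funpow_hom)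
  have g_pow: "g x [^] n = x [^] n" if "x \<in> carrier G" for x
    unfolding g_def
  proof (induct a)
    case (Suc j)
    then show ?case
      using pow_fixed hom_in_carrier[OF gh that] by simp
  qed simp
  have displacement: "g x \<otimes> inv x \<in> T" if x: "x \<in> carrier G" for x
    using g_pow[OF x] hom_in_carrier[OF gh x] x
    by (simp add: T_def g_def pow_mult_distrib m_comm nat_pow_inv)
  have "(g ^^ n) x = x" if "x \<in> carrier G" for x
    using displacement a that unfolding T_def
    by (intro funpow_eq_id_if_displacement_fixed[OF gh[of a, folded g_def]]) (auto simp: g_def)
  then have "f [^]\<^bsub>AutoGroup G\<^esub> (a * n) = \<one>\<^bsub>AutoGroup G\<^esub>"
    using monoid.nat_pow_closed[OF group.is_monoid[OF AutoGroup] f[folded AutoGroup_carrier]]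
    by (intro AutoGroup_eq_one) (auto simp: AutoGroup_pow_apply[OF f] g_def funpow_mult)
  with \<open>a > 0\<close> \<open>n > 0\<close> show ?thesis
    using that[of "a * n"] by simp
qed

section \<open>Coordinates with respect to a lattice basis\<close>

context lattice_basis
begin

lemma lincomb_inj:
  "int_lincomb M bs c = int_lincomb M bs d \<Longrightarrow> j < length bs \<Longrightarrow> c j = d j"
  by (rule int_independent_lincomb_inj[OF basis_independent basis_carrier])

definition coord :: "'a \<Rightarrow> nat \<Rightarrow> int" where
  "coord x = (SOME c. x [^] int D = int_lincomb M bs c)"

lemma pow_D_eq_coord: "x \<in> carrier M \<Longrightarrow> x [^] int D = int_lincomb M bs (coord x)"
  unfolding coord_def using pow_D_in_span by (rule someI_ex)

lemma torsion_pow_D_eq_one: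
  assumes y: "y \<in> carrier M" and "m > 0" and "y [^] int m = \<one>"
  shows "y [^] int D = \<one>"
proof -
  have "int_lincomb M bs (\<lambda>j. int m * coord y j) = (y [^] int D) [^] int m"
    using pow_D_eq_coord[OF y] int_lincomb_int_pow[OF basis_carrier] by simp
  also have "\<dots> = (y [^] int m) [^] int D"
    using y by (simp add: int_pow_pow mult.commute)
  also have "\<dots> = int_lincomb M bs (\<lambda>_. 0)"
    using assms by simp
  finally have eq: "int_lincomb M bs (\<lambda>j. int m * coord y j) = int_lincomb M bs (\<lambda>_. 0)" .
  have "coord y j = 0" if "j < length bs" for j
    using lincomb_inj[OF eq that] \<open>m > 0\<close> by simp
  then have "int_lincomb M bs (coord y) = int_lincomb M bs (\<lambda>_. 0)"
    by (intro int_lincomb_cong[OF basis_carrier]) auto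
  then show ?thesis
    using pow_D_eq_coord[OF y] by simp
qed

lemma coord_unique:
  assumes "x \<in> carrier M" and "x [^] int D = int_lincomb M bs c" and "j < length bs"
  shows "coord x j = c j"
  using lincomb_inj[of "coord x" c j] pow_D_eq_coord assms by simp

lemma coord_basis:
  assumes "b < length bs" and "a < length bs"
  shows "coord (bs ! b) a = (if a = b then int D else 0)"
  using coord_unique[OF nth_in_carrier[OF basis_carrier assms(1)]
      int_lincomb_single[OF basis_carrier assms(1), of "int D", symmetric] assms(2)]
  by simp

lemma hom_lincomb_pow_D:
  assumes f: "f \<in> hom M M" and y: "set ys \<subseteq> carrier M"
  shows "f (int_lincomb M ys c) [^] int D = int_lincomb M (map (\<lambda>b. f b [^] int D) ys) c"
proof -
  have "set (map f ys) \<subseteq> carrier M"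
    using y hom_in_carrier[OF f] by auto
  then show ?thesis
    using hom_int_lincomb[OF comm_group_axioms f y] int_lincomb_int_pow_map by (simp add: comp_def)
qed

lemma coord_hom:
  assumes f: "f \<in> hom M M" and y: "y \<in> carrier M" and a: "a < length bs"
  shows "int D * coord (f y) a = (\<Sum>l<length bs. coord y l * coord (f (bs ! l)) a)"
proof -
  have fy: "f y \<in> carrier M"
    using hom_in_carrier[OF f y] .
  have fb: "f (bs ! l) \<in> carrier M" if "l < length bs" for l
    using hom_in_carrier[OF f nth_in_carrier[OF basis_carrier that]] .
  have "f y [^] int (D * D) = f (y [^] int D) [^] int D"
    using hom_int_pow[OF f y is_group is_group] fy by (simp add: int_pow_pow)
  also have "\<dots> = int_lincomb M (map (\<lambda>b. f b [^] int D) bs) (coord y)"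
    using pow_D_eq_coord[OF y] hom_lincomb_pow_D[OF f basis_carrier] by simp
  also have "\<dots> = finprod M (\<lambda>l. int_lincomb M bs (coord (f (bs ! l))) [^] coord y l) {..<length bs}"
    unfolding int_lincomb_def[of M "map _ bs"] using fb
    by (intro finprod_cong') (auto simp: pow_D_eq_coord basis_carrier)
  also have "\<dots> = int_lincomb M bs (\<lambda>a. \<Sum>l<length bs. coord y l * coord (f (bs ! l)) a)"
    by (rule int_lincomb_finprod[OF basis_carrier]) simp
  finally have sum: "f y [^] int (D * D)
      = int_lincomb M bs (\<lambda>a. \<Sum>l<length bs. coord y l * coord (f (bs ! l)) a)" .
  have "f y [^] int (D * D) = int_lincomb M bs (\<lambda>a. int D * coord (f y) a)"
    using pow_D_eq_coord[OF fy] int_lincomb_int_pow[OF basis_carrier] fy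
    by (simp add: int_pow_pow flip: int_pow_pow)
  from lincomb_inj[OF trans[OF this[symmetric] sum] a] show ?thesis .
qed

lemma torsion_eq_if_coeffs_cong:
  assumes ss: "set ss \<subseteq> carrier M"
    and t1: "t1 = int_lincomb M ss c1" "t1 [^] int D = \<one>"
    and t2: "t2 = int_lincomb M ss c2" "t2 [^] int D = \<one>"
    and cong: "\<And>j. j < length ss \<Longrightarrow> c1 j mod int D = c2 j mod int D"
  shows "t1 = t2"
proof -
  define y where "y = int_lincomb M ss (\<lambda>j. (c1 j - c2 j) div int D)"
  have y: "y \<in> carrier M" and c2: "t2 \<in> carrier M"
    using ss t2 by (simp_all add: y_def)
  have split: "c1 j = int D * ((c1 j - c2 j) div int D) + c2 j" if "j < length ss" for j
    using cong[OF that] by (simp add: mod_eq_dvd_iff dvd_mult_div_cancel)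
  have "t1 = int_lincomb M ss (\<lambda>j. int D * ((c1 j - c2 j) div int D) + c2 j)"
    using t1(1) int_lincomb_cong[OF ss split] by simp
  also have "\<dots> = y [^] int D \<otimes> t2"
    using int_lincomb_add[OF ss] int_lincomb_int_pow[OF ss] t2 by (simp add: y_def)
  finally have t1_eq: "t1 = y [^] int D \<otimes> t2" .
  have "y [^] int (D * D) = (y [^] int D) [^] int D \<otimes> t2 [^] int D"
    using t2 y by (simp add: int_pow_pow)
  also have "\<dots> = \<one>"
    using t1_eq t1(2) y c2 by (simp add: int_pow_distrib)
  finally have "y [^] int D = \<one>"
    using torsion_pow_D_eq_one[OF y, of "D * D"] D_pos by simp
  then show "t1 = t2"
    using t1_eq c2 by simp
qed

lemma finite_torsion:
  assumes "finite S" and "S \<subseteq> carrier M" and "generate M S = carrier M"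
  shows "finite {t \<in> carrier M. t [^] int D = \<one>}"
proof -
  obtain ss where "set ss = S"
    using finite_list[OF \<open>finite S\<close>] by blast
  with assms have ss: "set ss \<subseteq> carrier M" and gen: "generate M (set ss) = carrier M"
    by auto
  define T where "T = {t \<in> carrier M. t [^] int D = \<one>}"
  define rep where "rep t = (SOME c. t = int_lincomb M ss c)" for t
  have rep: "t = int_lincomb M ss (rep t)" if "t \<in> carrier M" for t
  proof -
    have "\<exists>c. t = int_lincomb M ss c"
      using generate_int_lincomb[OF ss] that gen by simp
    then show ?thesis
      unfolding rep_def by (rule someI_ex)
  qed
  define \<phi> where "\<phi> t = (\<lambda>j\<in>{..<length ss}. rep t j mod int D)" for t
  have "\<phi> ` T \<subseteq> {..<length ss} \<rightarrow>\<^sub>E {0..<int D}"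
    using D_pos by (auto simp: \<phi>_def)
  then have "finite (\<phi> ` T)"
    by (rule finite_subset) (intro finite_PiE; simp)
  moreover have "inj_on \<phi> T"
  proof (rule inj_onI)
    fix t1 t2 assume "t1 \<in> T" and "t2 \<in> T" and eq: "\<phi> t1 = \<phi> t2"
    have "rep t1 j mod int D = rep t2 j mod int D" if "j < length ss" for j
      using fun_cong[OF eq, of j] that by (simp add: \<phi>_def)
    with \<open>t1 \<in> T\<close> \<open>t2 \<in> T\<close> rep show "t1 = t2"
      unfolding T_def by (intro torsion_eq_if_coeffs_cong[OF ss, of t1 "rep t1" t2 "rep t2"]) auto
  qed
  ultimately show ?thesis
    unfolding T_def[symmetric] by (simp add: finite_image_iff)
qed

lemma hom_pow_D_square_eq:
  assumes f: "f \<in> hom M M" and basis: "\<And>b. b \<in> set bs \<Longrightarrow> f b [^] int D = b [^] int D"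
    and x: "x \<in> carrier M"
  shows "f x [^] int (D * D) = x [^] int (D * D)"
proof -
  have "f x [^] int (D * D) = f (x [^] int D) [^] int D"
    using hom_int_pow[OF f x is_group is_group] hom_in_carrier[OF f x] by (simp add: int_pow_pow)
  also have "\<dots> = int_lincomb M (map (\<lambda>b. f b [^] int D) bs) (coord x)"
    using pow_D_eq_coord[OF x] hom_lincomb_pow_D[OF f basis_carrier] by simp
  also have "\<dots> = int_lincomb M (map (\<lambda>b. b [^] int D) bs) (coord x)"
    using basis by (metis (no_types, lifting) map_cong)
  also have "\<dots> = int_lincomb M bs (coord x) [^] int D"
    using int_lincomb_int_pow_map[OF basis_carrier] by simp
  also have "\<dots> = x [^] int (D * D)"
    using pow_D_eq_coord[OF x] int_pow_pow[OF x, of "int D" "int D"] by simp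
  finally show ?thesis .
qed

text \<open>The division by \<open>D\<close> is what makes \<open>coord_mat\<close> multiplicative.\<close>

definition coord_mat :: "('a \<Rightarrow> 'a) \<Rightarrow> complex mat" where
  "coord_mat f = mat (length bs) (length bs) (\<lambda>(a, b). of_int (coord (f (bs ! b)) a) / of_nat D)"

lemma coord_mat_carrier: "coord_mat f \<in> carrier_mat (length bs) (length bs)"
  by (simp add: coord_mat_def)

lemma coord_mat_denom_dvd: "denom_dvd_mat (length bs) D (coord_mat f)"
  using D_pos by (auto simp: denom_dvd_mat_def coord_mat_def)

lemma coord_mat_cong: "(\<And>x. x \<in> carrier M \<Longrightarrow> f x = g x) \<Longrightarrow> coord_mat f = coord_mat g"
  unfolding coord_mat_def using basis_carrier by (intro eq_matI) (auto simp: nth_in_carrier)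

lemma coord_mat_id: "coord_mat (\<lambda>x. x) = 1\<^sub>m (length bs)"
  unfolding coord_mat_def using D_pos by (intro eq_matI) (auto simp: coord_basis)

lemma coord_mat_comp:
  assumes f: "f \<in> hom M M" and g: "g \<in> hom M M"
  shows "coord_mat (\<lambda>x. f (g x)) = coord_mat f * coord_mat g"
proof (rule eq_matI)
  fix a b assume "a < dim_row (coord_mat f * coord_mat g)" and "b < dim_col (coord_mat f * coord_mat g)"
  then have a: "a < length bs" and b: "b < length bs"
    by (auto simp: coord_mat_def)
  define y where "y = g (bs ! b)"
  have y: "y \<in> carrier M"
    unfolding y_def using hom_in_carrier[OF g nth_in_carrier[OF basis_carrier b]] .
  have D0: "(of_nat D :: complex) \<noteq> 0"
    using D_pos by simp
  have "(coord_mat f * coord_mat g) $$ (a, b)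
      = (\<Sum>l = 0..<length bs. of_int (coord y l * coord (f (bs ! l)) a)) / (of_nat D * of_nat D)"
    using a b by (simp add: coord_mat_def scalar_prod_def y_def sum_divide_distrib mult.commute)
  also have "(\<Sum>l = 0..<length bs. of_int (coord y l * coord (f (bs ! l)) a) :: complex)
      = of_int (int D * coord (f y) a)"
    unfolding coord_hom[OF f y a] of_int_sum atLeast0LessThan ..
  finally show "coord_mat (\<lambda>x. f (g x)) $$ (a, b) = (coord_mat f * coord_mat g) $$ (a, b)"
    using a b D0 by (simp add: coord_mat_def y_def)
qed (auto simp: coord_mat_def)

lemma coord_mat_eq_one_imp_basis_pow_D:
  assumes f: "f \<in> hom M M" and "coord_mat f = 1\<^sub>m (length bs)" and "b \<in> set bs"
  shows "f b [^] int D = b [^] int D"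
proof -
  obtain l where l: "l < length bs" and b: "b = bs ! l"
    using \<open>b \<in> set bs\<close> by (auto simp: in_set_conv_nth)
  have "coord (f b) a = coord b a" if "a < length bs" for a
  proof -
    have "of_int (coord (f b) a) / of_nat D = (if a = l then 1 else (0 :: complex))"
      using arg_cong[OF assms(2), of "\<lambda>A. A $$ (a, l)"] that l b by (simp add: coord_mat_def)
    then have "(of_int (coord (f b) a) :: complex) = of_int (if a = l then int D else 0)"
      using D_pos by (auto simp: divide_eq_eq split: if_splits)
    then have "coord (f b) a = (if a = l then int D else 0)"
      by (simp only: of_int_eq_iff)
    then show ?thesis
      using coord_basis[OF l that] b by simp
  qed
  then have "int_lincomb M bs (coord (f b)) = int_lincomb M bs (coord b)"
    by (rule int_lincomb_cong[OF basis_carrier])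
  then show ?thesis
    using pow_D_eq_coord hom_in_carrier[OF f] nth_in_carrier[OF basis_carrier l] b by simp
qed

lemma coord_mat_AutoGroup_mult:
  assumes "f \<in> auto M" and "g \<in> auto M"
  shows "coord_mat (f \<otimes>\<^bsub>AutoGroup M\<^esub> g) = coord_mat f * coord_mat g"
proof -
  have "coord_mat (f \<otimes>\<^bsub>AutoGroup M\<^esub> g) = coord_mat (\<lambda>x. f (g x))"
    using assms by (intro coord_mat_cong) (simp add: AutoGroup_mult_apply)
  also have "\<dots> = coord_mat f * coord_mat g"
    using assms by (intro coord_mat_comp) (auto simp: auto_def)
  finally show ?thesis .
qed

lemma coord_mat_AutoGroup_one: "coord_mat \<one>\<^bsub>AutoGroup M\<^esub> = 1\<^sub>m (length bs)"
  using coord_mat_cong[of "\<one>\<^bsub>AutoGroup M\<^esub>" "\<lambda>x. x"] by (simp add: AutoGroup_one_apply coord_mat_id)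

lemma coord_mat_AutoGroup_pow:
  assumes f: "f \<in> auto M"
  shows "coord_mat (f [^]\<^bsub>AutoGroup M\<^esub> (m::nat)) = coord_mat f ^\<^sub>m m"
proof (induct m)
  case 0
  then show ?case
    using coord_mat_carrier[of f] by (simp add: coord_mat_AutoGroup_one)
next
  case (Suc m)
  have "f [^]\<^bsub>AutoGroup M\<^esub> m \<in> auto M"
    using monoid.nat_pow_closed[OF group.is_monoid[OF AutoGroup]] f by simp
  then show ?case
    using Suc coord_mat_AutoGroup_mult[OF _ f] by simp
qed

lemma AutoGroup_finite_order_if_coord_mat_one:
  assumes f: "f \<in> auto M" and one: "coord_mat f = 1\<^sub>m (length bs)"
    and S: "finite S" "S \<subseteq> carrier M" "generate M S = carrier M"
  obtains m :: nat where "m > 0" and "f [^]\<^bsub>AutoGroup M\<^esub> m = \<one>\<^bsub>AutoGroup M\<^esub>"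
proof -
  have fh: "f \<in> hom M M"
    using f by (simp add: auto_def)
  have "{t \<in> carrier M. t [^] (D * D) = \<one>} \<subseteq> {t \<in> carrier M. t [^] int D = \<one>}"
    using torsion_pow_D_eq_one[of _ "D * D"] D_pos by (auto simp flip: int_pow_int)
  then have fin: "finite {t \<in> carrier M. t [^] (D * D) = \<one>}"
    using finite_torsion[OF S] finite_subset by blast
  have pow: "f x [^] (D * D) = x [^] (D * D)" if "x \<in> carrier M" for x
    using hom_pow_D_square_eq[OF fh coord_mat_eq_one_imp_basis_pow_D[OF fh one] that]
    by (simp flip: int_pow_int)
  have "D * D > 0"
    using D_pos by simp
  from auto_finite_order_if_pow_fixed[OF f this fin pow] show ?thesis
    using that by blast
qed

lemma coord_mat_finite_order_if_roots:
  fixes r :: "nat \<Rightarrow> nat"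
  assumes z: "z \<in> auto M" and w: "\<And>i. w i \<in> auto M" and r: "filterlim r at_top sequentially"
    and root: "\<And>i. w i [^]\<^bsub>AutoGroup M\<^esub> r i = z"
  obtains m where "m > 0" and "coord_mat z ^\<^sub>m m = 1\<^sub>m (length bs)"
proof -
  let ?A = "AutoGroup M"
  have z_inv: "inv\<^bsub>?A\<^esub> z \<in> auto M"
    using z group.inv_closed[OF AutoGroup] by auto
  have inv: "coord_mat (inv\<^bsub>?A\<^esub> z) * coord_mat z = 1\<^sub>m (length bs)"
    using coord_mat_AutoGroup_mult[OF z_inv z] group.l_inv[OF AutoGroup] z
    by (simp add: coord_mat_AutoGroup_one)
  have root_mat: "coord_mat (w i) ^\<^sub>m r i = coord_mat z" for i
    using coord_mat_AutoGroup_pow[OF w, of i "r i"] root[of i] by simp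
  have denom: "denom_dvd_mat (length bs) D (coord_mat (w i) ^\<^sub>m k)" for i k
    using coord_mat_denom_dvd[of "w i [^]\<^bsub>?A\<^esub> k"] coord_mat_AutoGroup_pow[OF w] by simp
  show ?thesis
    by (rule finite_order_if_roots_of_unbounded_order[OF D_pos denom coord_mat_carrier inv root_mat r])
      (rule that)
qed

lemma AutoGroup_finite_order_if_roots:
  fixes r :: "nat \<Rightarrow> nat"
  assumes S: "finite S" "S \<subseteq> carrier M" "generate M S = carrier M"
    and z: "z \<in> auto M" and w: "\<And>i. w i \<in> auto M" and r: "filterlim r at_top sequentially"
    and root: "\<And>i. w i [^]\<^bsub>AutoGroup M\<^esub> r i = z"
  obtains n :: nat where "n > 0" and "z [^]\<^bsub>AutoGroup M\<^esub> n = \<one>\<^bsub>AutoGroup M\<^esub>"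
proof -
  let ?A = "AutoGroup M"
  obtain m where "m > 0" and "coord_mat z ^\<^sub>m m = 1\<^sub>m (length bs)"
    using coord_mat_finite_order_if_roots[OF z w r root] by blast
  then have "coord_mat (z [^]\<^bsub>?A\<^esub> m) = 1\<^sub>m (length bs)"
    by (simp add: coord_mat_AutoGroup_pow[OF z])
  moreover have "z [^]\<^bsub>?A\<^esub> m \<in> auto M"
    using monoid.nat_pow_closed[OF group.is_monoid[OF AutoGroup]] z by simp
  ultimately obtain a :: nat where "a > 0" and "(z [^]\<^bsub>?A\<^esub> m) [^]\<^bsub>?A\<^esub> a = \<one>\<^bsub>?A\<^esub>"
    using AutoGroup_finite_order_if_coord_mat_one S by blast
  moreover have "(z [^]\<^bsub>?A\<^esub> m) [^]\<^bsub>?A\<^esub> a = z [^]\<^bsub>?A\<^esub> (m * a)"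
    using monoid.nat_pow_pow[OF group.is_monoid[OF AutoGroup]] z by simp
  ultimately show ?thesis
    using that[of "m * a"] \<open>m > 0\<close> by simp
qed

end

theorem theorem3p9:
  fixes M :: "('a, 'b) monoid_scheme"
    and z :: "'a \<Rightarrow> 'a"
    and w :: "nat \<Rightarrow> 'a \<Rightarrow> 'a"
    and r :: "nat \<Rightarrow> nat"
  assumes "fin_gen_comm_group M"
    and "z \<in> auto M"
    and "\<And>i. w i \<in> auto M"
    and "filterlim r at_top sequentially"
    and "\<And>i. w i [^]\<^bsub>AutoGroup M\<^esub> r i = z"
  shows "group.ord (AutoGroup M) z \<noteq> 0"
proof -
  obtain S where "comm_group M" and "finite S" and S: "S \<subseteq> carrier M"
    and gen: "generate M S = carrier M"
    using assms(1) unfolding fin_gen_comm_group_def by blast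
  interpret comm_group M by fact
  obtain bs D where "lattice_basis M bs D"
    using lattice_basis_exists[OF \<open>finite S\<close> S gen] .
  then interpret lattice_basis M bs D .
  obtain n :: nat where "n > 0" and "z [^]\<^bsub>AutoGroup M\<^esub> n = \<one>\<^bsub>AutoGroup M\<^esub>"
    by (rule AutoGroup_finite_order_if_roots[where w = w, OF \<open>finite S\<close> S gen assms(2-5)])
  then show ?thesis
    using group.ord_eq_0[OF AutoGroup] assms(2) by auto
qed

end
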